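(* If $\Sigma$ is an Ehrhart fan, then there is a well-defined $\mathbb{Z}$-linear map $\widetilde\chi_\Sigma:\underline{\mathrm{PE}}(\Sigma)\to\mathbb{Z}$ such that $\widetilde\chi_\Sigma([e^f])=\chi_\Sigma([f])$ for all $f\in\mathrm{PL}(\Sigma)$.
   Context: $N$ is a free abelian group, $N_\mathbb{R}=N\otimes\mathbb{R}$, $M=\mathrm{Hom}(N,\mathbb{Z})$ viewed as integral linear functions. A fan is unimodular if it contains the origin and for each cone the primitive ray generators $u_\rho\in N$ extend to a $\mathbb{Z}$-basis of $N$. $\mathrm{PL}(\Sigma)$: functions on $|\Sigma|$ agreeing on each cone with some element of $M$; $\mathrm{L}(\Sigma)$ the restrictions of elements of $M$; $\underline{\mathrm{PL}}(\Sigma)=\mathrm{PL}(\Sigma)/\mathrm{L}(\Sigma)$. $\mathrm{PE}(\Sigma)$ is the subring of real-valued functions on $|\Sigma|$ generated by $e^f$, $f\in\mathrm{PL}(\Sigma)$, and $\underline{\mathrm{PE}}(\Sigma)=\mathrm{PE}(\Sigma)/\langle e^\ell-1\mid\ell\in\mathrm{L}(\Sigma)\rangle$. Courant function $\delta_\rho$: $1$ at $u_\rho$, $0$ at other ray generators. Star fan $\Sigma^\sigma$: image in $N_\mathbb{R}/\mathrm{span}(\sigma)$ (lattice $N/\mathrm{Span}_\mathbb{Z}(\sigma\cap N)$) of all faces of cones containing $\sigma$; $[f]^\sigma$ is the class of the function induced by $f-m$, $m\in M$ agreeing with $f$ on $\sigma$. A unimodular fan $\Sigma$ is Ehrhart (recursively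 on dimension) if (1) $\Sigma^\rho$ is Ehrhart for every ray $\rho$, and (2) there is $\chi_\Sigma:\underline{\mathrm{PL}}(\Sigma)\to\mathbb{Z}$ with $\chi_\Sigma(0)=1$ and $\chi_\Sigma([f])=\chi_\Sigma([f-\delta_\rho])+\chi_{\Sigma^\rho}([f]^\rho)$ for all $f\in\mathrm{PL}(\Sigma)$, $\rho\in\Sigma(1)$. Zero-dimensional fans are Ehrhart with $\chi=1$; such $\chi_\Sigma$ is unique (the Ehrhart polynomial). *)

theory Defs
  imports "HOL-Analysis.Analysis"
begin

text \<open>
The ambient real vector space is \<open>V = real^'n\<close> with the standard lattice
\<open>Lam\<close> of integer vectors.  A general lattice \<open>N\<close> (free abelian of finite rank) with
\<open>N_R = N \<otimes> R\<close> is modelled as the quotient \<open>V / W\<close> with lattice \<open>(Lam + W)/W\<close>, where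
\<open>W\<close> is a rational subspace (spanned by lattice vectors).  Objects on the quotient are
represented by W-saturated objects on \<open>V\<close>: cones are W-saturated subsets of \<open>V\<close>,
functions are functions on \<open>V\<close>, elements of \<open>M\<close> are integer vectors orthogonal to \<open>W\<close>.
This keeps the ambient type fixed, so that star fans (quotients by span of a cone)
are obtained by enlarging \<open>W\<close>.  Functions on the support are represented by
functions on \<open>V\<close> that vanish outside the support.
\<close>

definition Lam :: "(real^'n) set" where
  "Lam = {x. \<forall>i. x $ i \<in> \<int>}"

text \<open>M for the lattice (Lam+W)/W: integral linear functionals vanishing on W.\<close>
definition dualL :: "(real^'n) set \<Rightarrow> (real^'n) set" where
  "dualL W = {m. (\<forall>i. m $ i \<in> \<int>) \<and> (\<forall>w\<in>W. m \<bullet> w = 0)}"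

definition cone_mod :: "(real^'n) set \<Rightarrow> (real^'n) set \<Rightarrow> (real^'n) set" where
  "cone_mod W U = {x. \<exists>c. (\<forall>u\<in>U. c u \<ge> 0) \<and> x - (\<Sum>u\<in>U. c u *\<^sub>R u) \<in> W}"

text \<open>B is (a set of representatives of) a Z-basis of the lattice (Lam+W)/W.\<close>
definition zbasis_mod :: "(real^'n) set \<Rightarrow> (real^'n) set \<Rightarrow> bool" where
  "zbasis_mod W B \<longleftrightarrow> finite B \<and> B \<subseteq> Lam \<and>
     (\<forall>x\<in>Lam. \<exists>a::real^'n \<Rightarrow> int. x - (\<Sum>b\<in>B. of_int (a b) *\<^sub>R b) \<in> W) \<and>
     (\<forall>a a' :: real^'n \<Rightarrow> int.
        (\<Sum>b\<in>B. of_int (a b) *\<^sub>R b) - (\<Sum>b\<in>B. of_int (a' b) *\<^sub>R b) \<in> W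
        \<longrightarrow> (\<forall>b\<in>B. a b = a' b))"

definition face_mod :: "(real^'n) set \<Rightarrow> (real^'n) set \<Rightarrow> (real^'n) set \<Rightarrow> bool" where
  "face_mod W F C \<longleftrightarrow> (\<exists>m. (\<forall>w\<in>W. m \<bullet> w = 0) \<and> (\<forall>x\<in>C. m \<bullet> x \<ge> 0) \<and>
                          F = C \<inter> {x. m \<bullet> x = 0})"

text \<open>Unimodular fan in V/W (containing the origin cone, which is W itself).\<close>
definition unimodular_fan :: "(real^'n) set \<Rightarrow> (real^'n) set set \<Rightarrow> bool" where
  "unimodular_fan W Fan \<longleftrightarrow>
     subspace W \<and> W = span (W \<inter> Lam) \<and> finite Fan \<and> W \<in> Fan \<and>
     (\<forall>C\<in>Fan. \<exists>U B. U \<subseteq> B \<and> zbasis_mod W B \<and> C = cone_mod W U) \<and>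
     (\<forall>C\<in>Fan. \<forall>F. face_mod W F C \<longrightarrow> F \<in> Fan) \<and>
     (\<forall>C\<in>Fan. \<forall>D\<in>Fan. face_mod W (C \<inter> D) C)"

definition supp :: "(real^'n) set set \<Rightarrow> (real^'n) set" where
  "supp Fan = \<Union>Fan"

definition is_ray_gen :: "(real^'n) set \<Rightarrow> (real^'n) set \<Rightarrow> real^'n \<Rightarrow> bool" where
  "is_ray_gen W rho u \<longleftrightarrow> u \<in> Lam \<and> u \<notin> W \<and> rho = cone_mod W {u} \<and>
     (\<forall>x\<in>Lam \<inter> rho. \<exists>k::nat. x - of_nat k *\<^sub>R u \<in> W)"

definition rays :: "(real^'n) set \<Rightarrow> (real^'n) set set \<Rightarrow> (real^'n) set set" where
  "rays W Fan = {rho\<in>Fan. \<exists>u. is_ray_gen W rho u}"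

definition ray_gen :: "(real^'n) set \<Rightarrow> (real^'n) set \<Rightarrow> real^'n" where
  "ray_gen W rho = (SOME u. is_ray_gen W rho u)"

definition PL :: "(real^'n) set \<Rightarrow> (real^'n) set set \<Rightarrow> (real^'n \<Rightarrow> real) set" where
  "PL W Fan = {f. (\<forall>x. x \<notin> supp Fan \<longrightarrow> f x = 0) \<and>
                  (\<forall>C\<in>Fan. \<exists>m\<in>dualL W. \<forall>x\<in>C. f x = m \<bullet> x)}"

definition L :: "(real^'n) set \<Rightarrow> (real^'n) set set \<Rightarrow> (real^'n \<Rightarrow> real) set" where
  "L W Fan = {(\<lambda>x. if x \<in> supp Fan then m \<bullet> x else 0) | m. m \<in> dualL W}"

definition courant :: "(real^'n) set \<Rightarrow> (real^'n) set set \<Rightarrow> (real^'n) set \<Rightarrow> (real^'n \<Rightarrow> real)" where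
  "courant W Fan rho = (THE f. f \<in> PL W Fan \<and> f (ray_gen W rho) = 1 \<and>
       (\<forall>rho'\<in>rays W Fan. rho' \<noteq> rho \<longrightarrow> f (ray_gen W rho') = 0))"

definition star_space :: "(real^'n) set \<Rightarrow> (real^'n) set \<Rightarrow> (real^'n) set" where
  "star_space W rho = span (insert (ray_gen W rho) W)"

definition star_fan :: "(real^'n) set \<Rightarrow> (real^'n) set set \<Rightarrow> (real^'n) set \<Rightarrow> (real^'n) set set" where
  "star_fan W Fan rho =
     {{x + w | x w. x \<in> tau \<and> w \<in> star_space W rho} | tau.
        \<exists>C\<in>Fan. rho \<subseteq> C \<and> face_mod W tau C}"

text \<open>The function [f]^rho on the star fan induced by f - m, m agreeing with f on rho.\<close>
definition star_fun :: "(real^'n) set \<Rightarrow> (real^'n) set set \<Rightarrow> (real^'n) set \<Rightarrow> (real^'n \<Rightarrow> real) \<Rightarrow> (real^'n \<Rightarrow> real)" where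
  "star_fun W Fan rho f =
     (let m = (SOME m. m \<in> dualL W \<and> (\<forall>x\<in>rho. f x = m \<bullet> x)) in
      (\<lambda>x. if x \<in> supp (star_fan W Fan rho) then
             (let y = (SOME y. (\<exists>C\<in>Fan. rho \<subseteq> C \<and> y \<in> C) \<and> x - y \<in> star_space W rho)
              in f y - m \<bullet> y)
           else 0))"

text \<open>Ehrhart fans, with their Ehrhart polynomial chi (a map on PL invariant under L,
  i.e. a map on PL/L).  The family chis gives the Ehrhart polynomials of the star fans
  (unique by the paper).\<close>
inductive ehrhart_with :: "(real^'n) set \<Rightarrow> (real^'n) set set \<Rightarrow> ((real^'n \<Rightarrow> real) \<Rightarrow> int) \<Rightarrow> bool" where
  "\<lbrakk> unimodular_fan W Fan;
     \<forall>rho\<in>rays W Fan. ehrhart_with (star_space W rho) (star_fan W Fan rho) (chis rho);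
     \<forall>f\<in>PL W Fan. \<forall>l\<in>L W Fan. chi (\<lambda>x. f x + l x) = chi f;
     chi (\<lambda>x. 0) = 1;
     \<forall>f\<in>PL W Fan. \<forall>rho\<in>rays W Fan.
        chi f = chi (\<lambda>x. f x - courant W Fan rho x) + chis rho (star_fun W Fan rho f) \<rbrakk>
   \<Longrightarrow> ehrhart_with W Fan chi"

definition is_ehrhart :: "(real^'n) set \<Rightarrow> (real^'n) set set \<Rightarrow> bool" where
  "is_ehrhart W Fan \<longleftrightarrow> (\<exists>chi. ehrhart_with W Fan chi)"

definition expPL :: "(real^'n) set set \<Rightarrow> (real^'n \<Rightarrow> real) \<Rightarrow> (real^'n \<Rightarrow> real)" where
  "expPL Fan f = (\<lambda>x. if x \<in> supp Fan then exp (f x) else 0)"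

inductive_set PE :: "(real^'n) set \<Rightarrow> (real^'n) set set \<Rightarrow> (real^'n \<Rightarrow> real) set"
  for W Fan where
  gen: "f \<in> PL W Fan \<Longrightarrow> expPL Fan f \<in> PE W Fan"
| add: "a \<in> PE W Fan \<Longrightarrow> b \<in> PE W Fan \<Longrightarrow> (\<lambda>x. a x + b x) \<in> PE W Fan"
| neg: "a \<in> PE W Fan \<Longrightarrow> (\<lambda>x. - a x) \<in> PE W Fan"
| mult: "a \<in> PE W Fan \<Longrightarrow> b \<in> PE W Fan \<Longrightarrow> (\<lambda>x. a x * b x) \<in> PE W Fan"

inductive_set PE_ideal :: "(real^'n) set \<Rightarrow> (real^'n) set set \<Rightarrow> (real^'n \<Rightarrow> real) set"
  for W Fan where
  gen: "l \<in> L W Fan \<Longrightarrow> (\<lambda>x. expPL Fan l x - expPL Fan (\<lambda>_. 0) x) \<in> PE_ideal W Fan"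
| zero: "(\<lambda>x. 0) \<in> PE_ideal W Fan"
| add: "a \<in> PE_ideal W Fan \<Longrightarrow> b \<in> PE_ideal W Fan \<Longrightarrow> (\<lambda>x. a x + b x) \<in> PE_ideal W Fan"
| mult: "p \<in> PE W Fan \<Longrightarrow> a \<in> PE_ideal W Fan \<Longrightarrow> (\<lambda>x. p x * a x) \<in> PE_ideal W Fan"

end

theory Submission
  imports Defs
begin

text \<open>An element of \<open>PE(\<Sigma>)\<close> is a finite integral combination \<open>\<Sum> c\<^sub>i exp f\<^sub>i\<close>, and the map sends it
  to \<open>\<Sum> c\<^sub>i \<chi>(f\<^sub>i)\<close>. The point is well-definedness: a relation \<open>\<Sum> c\<^sub>i exp f\<^sub>i = 0\<close> forces
  \<open>\<Sum> c\<^sub>i \<chi>(f\<^sub>i) = 0\<close>. This is shown by induction on the Ehrhart structure, and for a fixed fan by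
  induction on the total size of the values of the \<open>f\<^sub>i\<close> at the ray generators. Along the generator
  \<open>u\<^sub>\<rho>\<close> of a ray, linear independence of exponentials splits a relation into relations among the
  terms of equal value \<open>f\<^sub>i(u\<^sub>\<rho>)\<close>, valid on the star of \<open>\<rho>\<close>. Shifting one such level by the Courant
  function \<open>\<delta>\<^sub>\<rho>\<close> keeps the relation, since \<open>\<delta>\<^sub>\<rho>\<close> vanishes off the star, and by the defining
  recursion changes \<open>\<Sum> c\<^sub>i \<chi>(f\<^sub>i)\<close> by the sum of the \<open>c\<^sub>i \<chi>([f\<^sub>i]\<^sup>\<rho>)\<close> on the star fan, which
  vanishes by induction because the level induces a relation there. Once all values at ray
  generators are \<open>0\<close> all \<open>f\<^sub>i\<close> vanish and the relation says \<open>\<Sum> c\<^sub>i = 0\<close>. Finally \<open>\<chi>\<close> is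
  invariant under adding linear functions, which kills the ideal generated by the \<open>exp \<ell> - 1\<close>.\<close>

section \<open>Lattices modulo a rational subspace\<close>

definition rational_subspace :: "(real^'n) set \<Rightarrow> bool" where
  "rational_subspace W \<longleftrightarrow> subspace W \<and> W = span (W \<inter> Lam)"

lemma rational_subspace_subspace: "rational_subspace W \<Longrightarrow> subspace W"
  unfolding rational_subspace_def by blast

lemma Lam_component_eq_floor: "x \<in> Lam \<Longrightarrow> x $ i = of_int \<lfloor>x $ i\<rfloor>"
  unfolding Lam_def by (auto elim!: Ints_cases)

lemma inner_dualL_Lam_Ints: "m \<in> dualL W \<Longrightarrow> x \<in> Lam \<Longrightarrow> m \<bullet> x \<in> \<int>"
  unfolding dualL_def Lam_def inner_vec_def
  by (auto intro!: Ints_sum Ints_mult simp: inner_real_def)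

lemma dualL_orthogonal: "m \<in> dualL W \<Longrightarrow> w \<in> W \<Longrightarrow> m \<bullet> w = 0"
  unfolding dualL_def by blast

lemma dualL_inner_eq_mod:
  assumes "m \<in> dualL W" "x - y \<in> W"
  shows "m \<bullet> x = m \<bullet> y"
  using dualL_orthogonal[OF assms] by (simp add: inner_diff_right)

lemma zero_in_dualL: "0 \<in> dualL W"
  unfolding dualL_def by simp

lemma dualL_add_scaleR_int:
  "m \<in> dualL W \<Longrightarrow> m' \<in> dualL W \<Longrightarrow> m + of_int e *\<^sub>R m' \<in> dualL W"
  unfolding dualL_def by (auto simp: inner_add_left)

lemma dualL_diff: "m \<in> dualL W \<Longrightarrow> m' \<in> dualL W \<Longrightarrow> m - m' \<in> dualL W"
  using dualL_add_scaleR_int[of m W m' "-1"] by simp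

lemma dualL_sum:
  assumes "finite S" "\<And>s. s \<in> S \<Longrightarrow> f s \<in> dualL W"
  shows "(\<Sum>s\<in>S. f s) \<in> dualL W"
  using assms unfolding dualL_def
  by (auto simp: sum_component inner_sum_left intro!: Ints_sum sum.neutral)

lemma inner_zero_on_span:
  assumes "\<And>y. y \<in> S \<Longrightarrow> m \<bullet> y = 0" "w \<in> span S"
  shows "m \<bullet> w = (0::real)"
  using orthogonal_to_span[OF assms(2), of m] assms(1) unfolding orthogonal_def by blast

lemma dualL_span_insert:
  assumes "m \<in> dualL W" "m \<bullet> v = 0"
  shows "m \<in> dualL (span (insert v W))"
proof -
  have "m \<bullet> w = 0" if "w \<in> span (insert v W)" for w
    using inner_zero_on_span[OF _ that, of m] assms dualL_orthogonal by blast
  then show ?thesis using assms(1) unfolding dualL_def by blast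
qed

lemma scaleR_in_subspace_eq_0:
  assumes "subspace W" "a *\<^sub>R g \<in> W" "g \<notin> W"
  shows "a = 0"
proof (rule ccontr)
  assume "a \<noteq> 0"
  then have "g = (1/a) *\<^sub>R (a *\<^sub>R g)" by simp
  then show False using subspace_scale[OF assms(1,2)] assms(3) by metis
qed

lemma diff_in_subspace_trans_iff:
  assumes "subspace W" "a - b \<in> W"
  shows "a - c \<in> W \<longleftrightarrow> b - c \<in> W"
proof
  assume "a - c \<in> W"
  then have "(a - c) - (a - b) \<in> W" using subspace_diff assms by blast
  then show "b - c \<in> W" by simp
next
  assume "b - c \<in> W"
  then have "(a - b) + (b - c) \<in> W" using subspace_add assms by blast
  then show "a - c \<in> W" by simp
qed

lemma sum_scaleR_delta:
  assumes "finite U" "u \<in> U"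
  shows "(\<Sum>u'\<in>U. (if u' = u then t else 0) *\<^sub>R u') = t *\<^sub>R (u::'a::real_vector)"
proof -
  have "(\<Sum>u'\<in>U. (if u' = u then t else 0) *\<^sub>R u') = (\<Sum>u'\<in>U. if u' = u then t *\<^sub>R u' else 0)"
    by (rule sum.cong) auto
  also have "\<dots> = t *\<^sub>R u" using assms by (simp add: sum.delta')
  finally show ?thesis .
qed

lemma zbasis_mod_finite: "zbasis_mod W B \<Longrightarrow> finite B"
  unfolding zbasis_mod_def by blast

lemma zbasis_mod_subset_Lam: "zbasis_mod W B \<Longrightarrow> B \<subseteq> Lam"
  unfolding zbasis_mod_def by blast

lemma zbasis_mod_coeffs_unique:
  assumes "zbasis_mod W B" "subspace W"
    "x - (\<Sum>b\<in>B. of_int (a b) *\<^sub>R b) \<in> W" "x - (\<Sum>b\<in>B. of_int (a' b) *\<^sub>R b) \<in> W" "b \<in> B"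
  shows "a b = a' b"
proof -
  have "(\<Sum>b\<in>B. of_int (a b) *\<^sub>R b) - (\<Sum>b\<in>B. of_int (a' b) *\<^sub>R b) \<in> W"
    using subspace_diff[OF assms(2) assms(4) assms(3)] by (simp add: algebra_simps)
  then show ?thesis using assms(1,5) unfolding zbasis_mod_def by blast
qed

lemma lattice_coords_from_axis_coords:
  fixes x :: "real^'n"
  assumes "subspace W" and axis: "\<And>j. axis j 1 - (\<Sum>b\<in>B. of_int (a j b) *\<^sub>R b) \<in> W"
  shows "x - (\<Sum>b\<in>B. (\<Sum>j\<in>UNIV. x $ j * of_int (a j b)) *\<^sub>R b) \<in> W"
proof -
  have "(\<Sum>j\<in>UNIV. x $ j *\<^sub>R (axis j 1 - (\<Sum>b\<in>B. of_int (a j b) *\<^sub>R b))) \<in> W"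
    using assms by (intro subspace_sum subspace_scale) auto
  moreover have "(\<Sum>j\<in>UNIV. x $ j *\<^sub>R (axis j 1 - (\<Sum>b\<in>B. of_int (a j b) *\<^sub>R b)))
      = x - (\<Sum>b\<in>B. (\<Sum>j\<in>UNIV. x $ j * of_int (a j b)) *\<^sub>R b)"
  proof -
    have "(\<Sum>j\<in>UNIV. x $ j *\<^sub>R (axis j 1 - (\<Sum>b\<in>B. of_int (a j b) *\<^sub>R b)))
        = (\<Sum>j\<in>UNIV. x $ j *\<^sub>R axis j 1) - (\<Sum>j\<in>UNIV. \<Sum>b\<in>B. (x $ j * of_int (a j b)) *\<^sub>R b)"
      by (simp add: scaleR_diff_right sum_subtractf scaleR_sum_right)
    also have "(\<Sum>j\<in>UNIV. \<Sum>b\<in>B. (x $ j * of_int (a j b)) *\<^sub>R b)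
        = (\<Sum>b\<in>B. (\<Sum>j\<in>UNIV. x $ j * of_int (a j b)) *\<^sub>R b)"
      by (subst sum.swap) (simp add: scaleR_sum_left)
    finally show ?thesis
      using basis_expansion[of x] by (simp add: scalar_mult_eq_scaleR)
  qed
  ultimately show ?thesis by simp
qed

lemma inner_axis_coords_eq_coord:
  fixes x :: "real^'n"
  assumes sub: "subspace W" and zb: "zbasis_mod W B" and u: "u \<in> B"
    and a: "\<And>j. axis j 1 - (\<Sum>b\<in>B. of_int (a j b) *\<^sub>R b) \<in> W"
    and x: "x \<in> Lam" and xA: "x - (\<Sum>b\<in>B. of_int (A b) *\<^sub>R b) \<in> W"
  shows "(\<chi> j. of_int (a j u)) \<bullet> x = of_int (A u)"
proof -
  define A' where "A' b = (\<Sum>j\<in>UNIV. \<lfloor>x $ j\<rfloor> * a j b)" for b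
  have "(\<Sum>j\<in>UNIV. x $ j * of_int (a j b)) = of_int (A' b)" for b
    unfolding A'_def by (subst Lam_component_eq_floor[OF x]) simp
  then have "x - (\<Sum>b\<in>B. of_int (A' b) *\<^sub>R b) \<in> W"
    using lattice_coords_from_axis_coords[OF sub a, of x] by simp
  then have "A u = A' u" using zbasis_mod_coeffs_unique[OF zb sub xA _ u] by blast
  moreover have "(\<chi> j. of_int (a j u)) \<bullet> x = of_int (A' u)"
    unfolding A'_def inner_vec_def
    by (subst Lam_component_eq_floor[OF x]) (simp add: inner_real_def mult.commute)
  ultimately show ?thesis by simp
qed

lemma zbasis_mod_dual_exists:
  fixes W :: "(real^'n) set"
  assumes W: "rational_subspace W" and zb: "zbasis_mod W B" and u: "u \<in> B"
  shows "\<exists>m. m \<in> dualL W \<and> (\<forall>b\<in>B. m \<bullet> b = (if b = u then 1 else 0))"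
proof -
  have sub: "subspace W" using W by (rule rational_subspace_subspace)
  have "axis j 1 \<in> Lam" for j :: 'n
    unfolding Lam_def axis_def by auto
  then have "\<forall>j. \<exists>a::real^'n \<Rightarrow> int. axis j 1 - (\<Sum>b\<in>B. of_int (a b) *\<^sub>R b) \<in> W"
    using zb unfolding zbasis_mod_def by blast
  then obtain a where a: "\<And>j. axis j 1 - (\<Sum>b\<in>B. of_int (a j b) *\<^sub>R b) \<in> W" by metis
  define m :: "real^'n" where "m = (\<chi> j. of_int (a j u))"
  note coord = inner_axis_coords_eq_coord[OF sub zb u a, folded m_def]
  have "m \<bullet> w = 0" if "w \<in> W \<inter> Lam" for w
    using coord[of w "\<lambda>_. 0"] that by simp
  then have "m \<bullet> w = 0" if "w \<in> W" for w
    using inner_zero_on_span[of "W \<inter> Lam" m w] W that unfolding rational_subspace_def by blast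
  moreover have "m $ i \<in> \<int>" for i
    unfolding m_def by simp
  ultimately have "m \<in> dualL W"
    unfolding dualL_def by blast
  moreover have "m \<bullet> b = (if b = u then 1 else 0)" if b: "b \<in> B" for b
  proof -
    have "b - (\<Sum>b'\<in>B. of_int (if b' = b then 1 else 0::int) *\<^sub>R b') = 0"
      using b zbasis_mod_finite[OF zb] by (simp add: if_distrib[of "\<lambda>k. of_int k *\<^sub>R _"] cong: if_cong)
    then have "b - (\<Sum>b'\<in>B. of_int (if b' = b then 1 else 0::int) *\<^sub>R b') \<in> W"
      using subspace_0[OF sub] by simp
    then show ?thesis
      using coord[of b "\<lambda>b'. if b' = b then 1 else 0"] b zbasis_mod_subset_Lam[OF zb] by auto
  qed
  ultimately show ?thesis by blast
qed

definition dual_basis_vector :: "(real^'n) set \<Rightarrow> (real^'n) set \<Rightarrow> real^'n \<Rightarrow> real^'n" where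
  "dual_basis_vector W B u = (SOME m. m \<in> dualL W \<and> (\<forall>b\<in>B. m \<bullet> b = (if b = u then 1 else 0)))"

lemma dual_basis_vector:
  assumes "rational_subspace W" "zbasis_mod W B" "u \<in> B"
  shows dual_basis_vector_dualL: "dual_basis_vector W B u \<in> dualL W"
    and inner_dual_basis_vector: "\<And>b. b \<in> B \<Longrightarrow> dual_basis_vector W B u \<bullet> b = (if b = u then 1 else 0)"
proof -
  have "dual_basis_vector W B u \<in> dualL W \<and> (\<forall>b\<in>B. dual_basis_vector W B u \<bullet> b = (if b = u then 1 else 0))"
    unfolding dual_basis_vector_def by (rule someI_ex) (rule zbasis_mod_dual_exists[OF assms])
  then show "dual_basis_vector W B u \<in> dualL W"
    "\<And>b. b \<in> B \<Longrightarrow> dual_basis_vector W B u \<bullet> b = (if b = u then 1 else 0)" by auto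
qed

lemma dual_basis_vector_coordinate:
  assumes "rational_subspace W" "zbasis_mod W B" "U \<subseteq> B" "x - (\<Sum>u\<in>U. c u *\<^sub>R u) \<in> W" "b \<in> B"
  shows "dual_basis_vector W B b \<bullet> x = (if b \<in> U then c b else 0)"
proof -
  have fin: "finite U" using zbasis_mod_finite[OF assms(2)] assms(3) finite_subset by blast
  have "dual_basis_vector W B b \<bullet> x = dual_basis_vector W B b \<bullet> (\<Sum>u\<in>U. c u *\<^sub>R u)"
    by (rule dualL_inner_eq_mod[OF dual_basis_vector_dualL[OF assms(1,2,5)] assms(4)])
  also have "\<dots> = (\<Sum>u\<in>U. c u * (if u = b then 1 else 0))"
    using assms(3) by (simp add: inner_sum_right inner_dual_basis_vector[OF assms(1,2,5)] subset_iff)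
  also have "\<dots> = (if b \<in> U then c b else 0)"
    using fin by (simp add: if_distrib cong: if_cong)
  finally show ?thesis .
qed

lemma zbasis_mod_not_in_subspace:
  assumes "rational_subspace W" "zbasis_mod W B" "u \<in> B"
  shows "u \<notin> W"
  using dualL_orthogonal[OF dual_basis_vector_dualL[OF assms]] inner_dual_basis_vector[OF assms assms(3)]
  by auto

text \<open>A positive multiple relation \<open>u \<equiv> \<beta> v\<close> between basis vectors of two lattice bases forces
  \<open>\<beta> = 1\<close>: pairing with the two dual vectors shows that both \<open>\<beta>\<close> and \<open>1/\<beta>\<close> are positive integers.\<close>
lemma zbasis_mod_positive_multiple_eq:
  assumes W: "rational_subspace W" and B: "zbasis_mod W B" "u \<in> B" and B': "zbasis_mod W B'" "v \<in> B'"
    and \<beta>: "\<beta> > 0" "u - \<beta> *\<^sub>R v \<in> W"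
  shows "\<beta> = 1"
proof -
  have Ints_ge1: "(x::real) \<in> \<int> \<Longrightarrow> x > 0 \<Longrightarrow> x \<ge> 1" for x by (auto elim!: Ints_cases)
  define m where "m = dual_basis_vector W B' v"
  define m' where "m' = dual_basis_vector W B u"
  have m: "m \<in> dualL W" "m \<bullet> v = 1"
    unfolding m_def using dual_basis_vector[OF W B'] inner_dual_basis_vector[OF W B' B'(2)] by auto
  have m': "m' \<in> dualL W" "m' \<bullet> u = 1"
    unfolding m'_def using dual_basis_vector[OF W B] inner_dual_basis_vector[OF W B B(2)] by auto
  have uv: "u \<in> Lam" "v \<in> Lam" using B B' zbasis_mod_subset_Lam by blast+
  have "m \<bullet> u = \<beta>" using dualL_inner_eq_mod[OF m(1) \<beta>(2)] m(2) by simp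
  then have "\<beta> \<ge> 1" using inner_dualL_Lam_Ints[OF m(1) uv(1)] \<beta>(1) Ints_ge1 by simp
  have prod: "\<beta> * (m' \<bullet> v) = 1" using dualL_inner_eq_mod[OF m'(1) \<beta>(2)] m'(2) by simp
  then have "m' \<bullet> v > 0" using \<beta>(1) zero_less_mult_pos by (metis zero_less_one)
  then have "m' \<bullet> v \<ge> 1" using inner_dualL_Lam_Ints[OF m'(1) uv(2)] Ints_ge1 by blast
  then have "\<beta> * 1 \<le> 1" using prod \<beta>(1) by (metis mult_left_mono less_imp_le)
  then show ?thesis using \<open>\<beta> \<ge> 1\<close> by simp
qed


section \<open>Cones modulo a subspace\<close>

lemma cone_mod_singleton_iff: "x \<in> cone_mod W {u} \<longleftrightarrow> (\<exists>t\<ge>0. x - t *\<^sub>R u \<in> W)"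
  unfolding cone_mod_def by auto

lemma cone_mod_saturated:
  assumes "subspace W" "x \<in> cone_mod W U" "x - y \<in> W"
  shows "y \<in> cone_mod W U"
proof -
  obtain c where c: "\<forall>u\<in>U. c u \<ge> 0" "x - (\<Sum>u\<in>U. c u *\<^sub>R u) \<in> W"
    using assms(2) unfolding cone_mod_def by blast
  have "y - (\<Sum>u\<in>U. c u *\<^sub>R u) = (x - (\<Sum>u\<in>U. c u *\<^sub>R u)) - (x - y)" by simp
  also have "\<dots> \<in> W" using subspace_diff[OF assms(1) c(2) assms(3)] .
  finally show ?thesis using c(1) unfolding cone_mod_def by blast
qed

lemma cone_mod_singleton_subset:
  assumes "subspace W" "finite U" "u \<in> U"
  shows "cone_mod W {u} \<subseteq> cone_mod W U"
proof
  fix x assume "x \<in> cone_mod W {u}"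
  then obtain t where t: "t \<ge> 0" "x - t *\<^sub>R u \<in> W" unfolding cone_mod_singleton_iff by blast
  show "x \<in> cone_mod W U" unfolding cone_mod_def
    by (rule CollectI, rule exI[of _ "\<lambda>u'. if u' = u then t else 0"])
       (use t sum_scaleR_delta[OF assms(2,3)] in auto)
qed

lemma generator_in_cone_mod:
  assumes "subspace W" "finite U" "u \<in> U"
  shows "u \<in> cone_mod W U"
proof -
  have "u \<in> cone_mod W {u}"
    unfolding cone_mod_singleton_iff by (rule exI[of _ 1]) (simp add: subspace_0[OF assms(1)])
  then show ?thesis using cone_mod_singleton_subset[OF assms] by blast
qed

lemma cone_mod_add_scaleR:
  assumes "subspace W" "y \<in> cone_mod W U" "u \<in> cone_mod W U" "t \<ge> 0"
  shows "y + t *\<^sub>R u \<in> cone_mod W U"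
proof -
  obtain c where c: "\<forall>u\<in>U. c u \<ge> 0" "y - (\<Sum>u\<in>U. c u *\<^sub>R u) \<in> W"
    using assms(2) unfolding cone_mod_def by blast
  obtain e where e: "\<forall>u\<in>U. e u \<ge> 0" "u - (\<Sum>u\<in>U. e u *\<^sub>R u) \<in> W"
    using assms(3) unfolding cone_mod_def by blast
  have "(y - (\<Sum>u\<in>U. c u *\<^sub>R u)) + t *\<^sub>R (u - (\<Sum>u\<in>U. e u *\<^sub>R u)) \<in> W"
    by (rule subspace_add[OF assms(1) c(2) subspace_scale[OF assms(1) e(2)]])
  moreover have "(y - (\<Sum>u\<in>U. c u *\<^sub>R u)) + t *\<^sub>R (u - (\<Sum>u\<in>U. e u *\<^sub>R u))
      = (y + t *\<^sub>R u) - (\<Sum>u'\<in>U. (c u' + t * e u') *\<^sub>R u')"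
    by (simp add: algebra_simps sum.distrib scaleR_sum_right)
  moreover have "\<forall>u'\<in>U. c u' + t * e u' \<ge> 0" using c(1) e(1) assms(4) by simp
  ultimately show ?thesis unfolding cone_mod_def by auto
qed

lemma cone_mod_singleton_cong:
  assumes "subspace W" "u - v \<in> W"
  shows "cone_mod W {u} = cone_mod W {v}"
proof -
  have "x - t *\<^sub>R u \<in> W \<longleftrightarrow> x - t *\<^sub>R v \<in> W" for x t
  proof -
    have "t *\<^sub>R (u - v) \<in> W" using assms subspace_scale by blast
    then show ?thesis using assms(1)
      by (metis (no_types, lifting) diff_add_cancel diff_diff_eq2 scaleR_diff_right subspace_add subspace_diff)
  qed
  then show ?thesis unfolding cone_mod_singleton_iff set_eq_iff by blast
qed

text \<open>The face functional is nonnegative on all generators and vanishes on the point.\<close>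
lemma face_mod_contains_support:
  assumes W: "subspace W" and U: "finite U" and F: "face_mod W F (cone_mod W U)" and x: "x \<in> F"
    and c: "\<forall>u\<in>U. c u \<ge> 0" "x - (\<Sum>u\<in>U. c u *\<^sub>R u) \<in> W" and u: "u \<in> U" "c u \<noteq> 0"
  shows "u \<in> F"
proof -
  obtain m where m: "\<forall>w\<in>W. m \<bullet> w = 0" "\<forall>x\<in>cone_mod W U. m \<bullet> x \<ge> 0"
      "F = cone_mod W U \<inter> {x. m \<bullet> x = 0}"
    using F unfolding face_mod_def by blast
  have gen: "u' \<in> cone_mod W U" if "u' \<in> U" for u'
    using generator_in_cone_mod[OF W U that] .
  have nonneg: "\<forall>u'\<in>U. c u' * (m \<bullet> u') \<ge> 0"
    using m(2) gen c(1) by (simp add: mult_nonneg_nonneg)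
  have "m \<bullet> (x - (\<Sum>u\<in>U. c u *\<^sub>R u)) = 0" using m(1) c(2) by blast
  moreover have "m \<bullet> x = 0" using x m(3) by blast
  ultimately have "(\<Sum>u\<in>U. c u * (m \<bullet> u)) = 0" by (simp add: inner_diff_right inner_sum_right)
  then have "\<forall>u\<in>U. c u * (m \<bullet> u) = 0"
    using sum_nonneg_eq_0_iff[OF U, of "\<lambda>u. c u * (m \<bullet> u)"] nonneg by simp
  then have "m \<bullet> u = 0" using u by auto
  then show ?thesis using m(3) gen[OF u(1)] by blast
qed

lemma cone_mod_compose:
  assumes W: "subspace W" and x: "x - (\<Sum>u\<in>U. a u *\<^sub>R u) \<in> W"
    and U: "\<And>u. u \<in> U \<Longrightarrow> a u \<noteq> 0 \<Longrightarrow> u - (\<Sum>v\<in>V. b u v *\<^sub>R v) \<in> W"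
  shows "x - (\<Sum>v\<in>V. (\<Sum>u\<in>U. a u * b u v) *\<^sub>R v) \<in> W"
proof -
  have "a u *\<^sub>R (u - (\<Sum>v\<in>V. b u v *\<^sub>R v)) \<in> W" if "u \<in> U" for u
    using U[OF that] subspace_scale[OF W] subspace_0[OF W] by (cases "a u = 0") auto
  then have "(\<Sum>u\<in>U. a u *\<^sub>R (u - (\<Sum>v\<in>V. b u v *\<^sub>R v))) \<in> W"
    by (rule subspace_sum[OF W])
  then have "(x - (\<Sum>u\<in>U. a u *\<^sub>R u)) + (\<Sum>u\<in>U. a u *\<^sub>R (u - (\<Sum>v\<in>V. b u v *\<^sub>R v))) \<in> W"
    using subspace_add[OF W x] by blast
  moreover have "(\<Sum>u\<in>U. \<Sum>v\<in>V. (a u * b u v) *\<^sub>R v) = (\<Sum>v\<in>V. (\<Sum>u\<in>U. a u * b u v) *\<^sub>R v)"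
    by (subst sum.swap) (simp add: scaleR_sum_left)
  ultimately show ?thesis
    by (simp add: scaleR_diff_right sum_subtractf scaleR_sum_right)
qed


section \<open>Rays of a unimodular fan\<close>

lemma unimodular_fanD:
  assumes "unimodular_fan W Fan"
  shows unimodular_fan_rational: "rational_subspace W"
    and unimodular_fan_subspace: "subspace W"
    and unimodular_fan_finite: "finite Fan"
    and unimodular_fan_zero_cone: "W \<in> Fan"
    and unimodular_fan_face: "\<And>C F. C \<in> Fan \<Longrightarrow> face_mod W F C \<Longrightarrow> F \<in> Fan"
    and unimodular_fan_inter_face: "\<And>C D. C \<in> Fan \<Longrightarrow> D \<in> Fan \<Longrightarrow> face_mod W (C \<inter> D) C"
  using assms unfolding unimodular_fan_def rational_subspace_def by blast+

definition cone_presentation :: "(real^'n) set \<Rightarrow> (real^'n) set \<Rightarrow> (real^'n) set \<times> (real^'n) set" where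
  "cone_presentation W C = (SOME (U, B). U \<subseteq> B \<and> zbasis_mod W B \<and> C = cone_mod W U)"

lemma cone_presentation:
  assumes "unimodular_fan W Fan" "C \<in> Fan" "cone_presentation W C = (U, B)"
  shows "U \<subseteq> B" "zbasis_mod W B" "C = cone_mod W U" "finite U"
proof -
  have "\<exists>p. case p of (U, B) \<Rightarrow> U \<subseteq> B \<and> zbasis_mod W B \<and> C = cone_mod W U"
    using assms(1,2) unfolding unimodular_fan_def by auto
  then have "case cone_presentation W C of (U, B) \<Rightarrow> U \<subseteq> B \<and> zbasis_mod W B \<and> C = cone_mod W U"
    unfolding cone_presentation_def by (rule someI_ex)
  then show "U \<subseteq> B" "zbasis_mod W B" "C = cone_mod W U" using assms(3) by auto
  then show "finite U" using zbasis_mod_finite finite_subset by blast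
qed

lemma is_ray_gen_mem: "subspace W \<Longrightarrow> is_ray_gen W \<rho> u \<Longrightarrow> u \<in> \<rho>"
  using generator_in_cone_mod[of W "{u}" u] unfolding is_ray_gen_def by auto

lemma is_ray_gen_unique:
  assumes W: "subspace W" and u: "is_ray_gen W \<rho> u" and v: "is_ray_gen W \<rho> v"
  shows "u - v \<in> W"
proof -
  obtain k :: nat where k: "v - of_nat k *\<^sub>R u \<in> W"
    using u v is_ray_gen_mem[OF W v] unfolding is_ray_gen_def by blast
  obtain k' :: nat where k': "u - of_nat k' *\<^sub>R v \<in> W"
    using u v is_ray_gen_mem[OF W u] unfolding is_ray_gen_def by blast
  have "(u - of_nat k' *\<^sub>R v) + of_nat k' *\<^sub>R (v - of_nat k *\<^sub>R u) \<in> W"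
    using W k k' by (intro subspace_add subspace_scale) auto
  moreover have "(u - of_nat k' *\<^sub>R v) + of_nat k' *\<^sub>R (v - of_nat k *\<^sub>R u) = (1 - of_nat (k' * k)) *\<^sub>R u"
    by (simp add: algebra_simps)
  ultimately have "(1 - of_nat (k' * k) :: real) = 0"
    using scaleR_in_subspace_eq_0[OF W] u unfolding is_ray_gen_def by metis
  then have "k' * k = 1" by (metis eq_iff_diff_eq_0 of_nat_1 of_nat_eq_iff)
  then have "k = 1" by simp
  then show ?thesis using k W by (metis scaleR_one of_nat_1 subspace_neg minus_diff_eq)
qed

lemma is_ray_gen_ray_gen: "\<rho> \<in> rays W Fan \<Longrightarrow> is_ray_gen W \<rho> (ray_gen W \<rho>)"
  unfolding rays_def ray_gen_def by (auto intro: someI)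

lemma ray_gen_mem: "unimodular_fan W Fan \<Longrightarrow> \<rho> \<in> rays W Fan \<Longrightarrow> ray_gen W \<rho> \<in> \<rho>"
  using is_ray_gen_mem[OF unimodular_fan_subspace is_ray_gen_ray_gen] .

lemma ray_gen_eq_mod:
  assumes "subspace W" "is_ray_gen W \<rho> u"
  shows "ray_gen W \<rho> - u \<in> W"
proof -
  have "is_ray_gen W \<rho> (ray_gen W \<rho>)" unfolding ray_gen_def using assms(2) by (rule someI)
  then show ?thesis using is_ray_gen_unique assms by blast
qed

lemma rays_subset: "rays W Fan \<subseteq> Fan"
  unfolding rays_def by blast

lemma rays_finite: "unimodular_fan W Fan \<Longrightarrow> finite (rays W Fan)"
  using finite_subset[OF rays_subset unimodular_fan_finite] .

lemma is_ray_gen_zbasis_mod: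
  assumes W: "rational_subspace W" and zb: "zbasis_mod W B" and u: "u \<in> B"
  shows "is_ray_gen W (cone_mod W {u}) u"
proof -
  have "\<exists>k::nat. x - of_nat k *\<^sub>R u \<in> W" if x: "x \<in> Lam" "x \<in> cone_mod W {u}" for x
  proof -
    obtain t where t: "t \<ge> 0" "x - t *\<^sub>R u \<in> W"
      using x(2) unfolding cone_mod_singleton_iff by blast
    then have "x - (\<Sum>u'\<in>{u}. t *\<^sub>R u') \<in> W" by simp
    then have "dual_basis_vector W B u \<bullet> x = t"
      using dual_basis_vector_coordinate[OF W zb, of "{u}" x "\<lambda>_. t" u] u by simp
    then have "t \<in> \<int>" using inner_dualL_Lam_Ints[OF dual_basis_vector_dualL[OF W zb u] x(1)] by simp
    then obtain k where "t = of_int k" by (auto elim: Ints_cases)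
    then have "t = of_nat (nat k)" using t(1) by simp
    then show ?thesis using t(2) by (intro exI[of _ "nat k"]) simp
  qed
  moreover have "u \<in> Lam" using zbasis_mod_subset_Lam[OF zb] u by blast
  ultimately show ?thesis
    unfolding is_ray_gen_def using zbasis_mod_not_in_subspace[OF W zb u] by blast
qed

text \<open>The face cut out by the sum of the dual vectors of the other generators.\<close>
lemma cone_mod_generator_face:
  assumes W: "rational_subspace W" and UB: "U \<subseteq> B" and zb: "zbasis_mod W B" and u: "u \<in> U"
  shows "face_mod W (cone_mod W {u}) (cone_mod W U)"
proof -
  have sub: "subspace W" using W by (rule rational_subspace_subspace)
  have finU: "finite U" using zbasis_mod_finite[OF zb] UB finite_subset by blast
  define m where "m = (\<Sum>u'\<in>U - {u}. dual_basis_vector W B u')"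
  have m0: "\<forall>w\<in>W. m \<bullet> w = 0"
    unfolding m_def inner_sum_left using UB
    by (intro ballI sum.neutral dualL_orthogonal[OF dual_basis_vector_dualL[OF W zb]]) auto
  have mx: "m \<bullet> x = (\<Sum>u'\<in>U - {u}. c u')" if "x - (\<Sum>u\<in>U. c u *\<^sub>R u) \<in> W" for x c
    unfolding m_def inner_sum_left using dual_basis_vector_coordinate[OF W zb UB that] UB
    by (intro sum.cong) auto
  have "x \<in> cone_mod W {u} \<longleftrightarrow> x \<in> cone_mod W U \<and> m \<bullet> x = 0" for x
  proof
    assume "x \<in> cone_mod W {u}"
    then obtain t where t: "t \<ge> 0" "x - t *\<^sub>R u \<in> W" unfolding cone_mod_singleton_iff by blast
    then have x: "x - (\<Sum>u'\<in>U. (if u' = u then t else 0) *\<^sub>R u') \<in> W"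
      using sum_scaleR_delta[OF finU u] by simp
    have "m \<bullet> x = 0" using mx[OF x] by simp
    moreover have "x \<in> cone_mod W U"
      using x t(1) unfolding cone_mod_def by (intro CollectI exI[of _ "\<lambda>u'. if u' = u then t else 0"]) auto
    ultimately show "x \<in> cone_mod W U \<and> m \<bullet> x = 0" by blast
  next
    assume x: "x \<in> cone_mod W U \<and> m \<bullet> x = 0"
    then obtain c where c: "\<forall>u\<in>U. c u \<ge> 0" "x - (\<Sum>u\<in>U. c u *\<^sub>R u) \<in> W"
      unfolding cone_mod_def by blast
    have "(\<Sum>u'\<in>U - {u}. c u') = 0" using mx[OF c(2)] x by simp
    then have "\<forall>u'\<in>U - {u}. c u' = 0"
      using sum_nonneg_eq_0_iff[of "U - {u}" c] finU c(1) by simp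
    then have "(\<Sum>u'\<in>U. c u' *\<^sub>R u') = (\<Sum>u'\<in>U. (if u' = u then c u else 0) *\<^sub>R u')"
      by (intro sum.cong) auto
    then have "x - c u *\<^sub>R u \<in> W" using c(2) sum_scaleR_delta[OF finU u] by simp
    then show "x \<in> cone_mod W {u}" unfolding cone_mod_singleton_iff using c(1) u by blast
  qed
  moreover have "\<forall>x\<in>cone_mod W U. m \<bullet> x \<ge> 0"
    using mx unfolding cone_mod_def by (force intro: sum_nonneg)
  ultimately show ?thesis unfolding face_mod_def using m0 by blast
qed

lemma ray_of_cone_generator:
  assumes uf: "unimodular_fan W Fan" and C: "cone_mod W U \<in> Fan" and UB: "U \<subseteq> B"
    and zb: "zbasis_mod W B" and u: "u \<in> U"
  shows "cone_mod W {u} \<in> rays W Fan"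
  using unimodular_fan_face[OF uf C cone_mod_generator_face[OF unimodular_fan_rational[OF uf] UB zb u]]
    is_ray_gen_zbasis_mod[OF unimodular_fan_rational[OF uf] zb] UB u
  unfolding rays_def by blast


lemma ray_cone_generator_multiple:
  assumes W: "rational_subspace W" and g: "is_ray_gen W (cone_mod W U) g" and UB: "U \<subseteq> B"
    and zb: "zbasis_mod W B" and u: "u \<in> U"
  shows "\<exists>k::nat. k \<noteq> 0 \<and> u - of_nat k *\<^sub>R g \<in> W"
proof -
  have finU: "finite U" using zbasis_mod_finite[OF zb] UB finite_subset by blast
  have "u \<in> cone_mod W U" by (rule generator_in_cone_mod[OF rational_subspace_subspace[OF W] finU u])
  moreover have "u \<in> Lam" using zbasis_mod_subset_Lam[OF zb] UB u by blast
  ultimately obtain k :: nat where k: "u - of_nat k *\<^sub>R g \<in> W"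
    using g unfolding is_ray_gen_def by blast
  moreover have "k \<noteq> 0"
  proof
    assume "k = 0"
    then have "u \<in> W" using k by simp
    then show False using zbasis_mod_not_in_subspace[OF W zb] UB u by blast
  qed
  ultimately show ?thesis by blast
qed

text \<open>Two generators of a ray cone would both be positive multiples of the primitive generator,
  hence linearly dependent modulo \<open>W\<close>.\<close>
lemma ray_cone_generators_singleton:
  assumes W: "rational_subspace W" and g: "is_ray_gen W (cone_mod W U) g" and UB: "U \<subseteq> B"
    and zb: "zbasis_mod W B"
  shows "\<exists>u. U = {u}"
proof -
  have sub: "subspace W" using W by (rule rational_subspace_subspace)
  obtain k where k: "\<And>u. u \<in> U \<Longrightarrow> k u \<noteq> 0 \<and> u - of_nat (k u) *\<^sub>R g \<in> W"
    using ray_cone_generator_multiple[OF W g UB zb] by metis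
  obtain c where "g - (\<Sum>u\<in>U. c u *\<^sub>R u) \<in> W"
    using is_ray_gen_mem[OF sub g] unfolding cone_mod_def by blast
  then have "U \<noteq> {}" using g unfolding is_ray_gen_def by auto
  then obtain u where u: "u \<in> U" by blast
  have "u2 = u" if u2: "u2 \<in> U" for u2
  proof (rule ccontr)
    assume "u2 \<noteq> u"
    have "of_nat (k u2) *\<^sub>R (u - of_nat (k u) *\<^sub>R g) - of_nat (k u) *\<^sub>R (u2 - of_nat (k u2) *\<^sub>R g) \<in> W"
      using subspace_diff[OF sub subspace_scale[OF sub conjunct2[OF k[OF u]]]
          subspace_scale[OF sub conjunct2[OF k[OF u2]]]] .
    then have w: "of_nat (k u2) *\<^sub>R u - of_nat (k u) *\<^sub>R u2 \<in> W"
      by (simp add: algebra_simps)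
    have "dual_basis_vector W B u \<bullet> (of_nat (k u2) *\<^sub>R u - of_nat (k u) *\<^sub>R u2) = of_nat (k u2)"
      using inner_dual_basis_vector[OF W zb] u u2 \<open>u2 \<noteq> u\<close> UB by (auto simp: inner_diff_right subset_iff)
    then show False
      using dualL_orthogonal[OF dual_basis_vector_dualL[OF W zb] w] u UB k[OF u2] by auto
  qed
  then show ?thesis using u by blast
qed

text \<open>The generator of a ray cone is a positive integral multiple of the primitive generator, and
  conversely the primitive generator is an integral multiple of it because its coordinate in the basis
  is integral.\<close>
lemma ray_cone_presentation:
  assumes W: "rational_subspace W" and g: "is_ray_gen W (cone_mod W U) g" and UB: "U \<subseteq> B"
    and zb: "zbasis_mod W B"
  shows "\<exists>u. U = {u} \<and> u - g \<in> W"
proof -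
  have sub: "subspace W" using W by (rule rational_subspace_subspace)
  obtain u where single: "U = {u}" using ray_cone_generators_singleton[OF assms] by blast
  then obtain k :: nat where k: "u - of_nat k *\<^sub>R g \<in> W"
    using ray_cone_generator_multiple[OF W g UB zb] by blast
  obtain c where c: "g - (\<Sum>u\<in>U. c u *\<^sub>R u) \<in> W"
    using is_ray_gen_mem[OF sub g] unfolding cone_mod_def by blast
  have "dual_basis_vector W B u \<bullet> g = c u"
    using dual_basis_vector_coordinate[OF W zb UB c] single UB by auto
  moreover have "u \<in> B" "g \<in> Lam" using single UB g unfolding is_ray_gen_def by auto
  ultimately have "c u \<in> \<int>"
    using inner_dualL_Lam_Ints[OF dual_basis_vector_dualL[OF W zb]] by metis
  then obtain i where i: "c u = of_int i" by (auto elim: Ints_cases)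
  have "(g - c u *\<^sub>R u) + c u *\<^sub>R (u - of_nat k *\<^sub>R g) \<in> W"
    using subspace_add[OF sub _ subspace_scale[OF sub k]] c single by simp
  moreover have "(g - c u *\<^sub>R u) + c u *\<^sub>R (u - of_nat k *\<^sub>R g) = (1 - c u * of_nat k) *\<^sub>R g"
    by (simp add: algebra_simps)
  ultimately have "1 - c u * of_nat k = 0"
    using scaleR_in_subspace_eq_0[OF sub] g unfolding is_ray_gen_def by metis
  then have "i * int k = 1" using i
    by (metis eq_iff_diff_eq_0 of_int_1 of_int_eq_iff of_int_mult of_int_of_nat_eq)
  then have "k = 1" using zmult_eq_1_iff by fastforce
  then show ?thesis using single k by auto
qed

lemma nonneg_double_sum_pick:
  fixes p :: "'a \<Rightarrow> 'b \<Rightarrow> real"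
  assumes U: "finite U" and nonneg: "\<And>u v. u \<in> U \<Longrightarrow> v \<in> V \<Longrightarrow> p u v \<ge> 0" and v: "v \<in> V"
    and one: "(\<Sum>u\<in>U. p u v) = 1" and zero: "\<And>v'. v' \<in> V \<Longrightarrow> v' \<noteq> v \<Longrightarrow> (\<Sum>u\<in>U. p u v') = 0"
  shows "\<exists>u\<in>U. p u v > 0 \<and> (\<forall>v'\<in>V. v' \<noteq> v \<longrightarrow> p u v' = 0)"
proof -
  obtain u where u: "u \<in> U" "p u v \<noteq> 0"
    using one by (metis sum.neutral zero_neq_one)
  have "p u v' = 0" if "v' \<in> V" "v' \<noteq> v" for v'
    using sum_nonneg_eq_0_iff[OF U, of "\<lambda>u. p u v'"] zero[OF that] nonneg that u(1) by simp
  moreover have "p u v > 0" using nonneg[OF u(1) v] u(2) by simp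
  ultimately show ?thesis using u(1) by blast
qed

text \<open>Write \<open>v\<close> in the generators of \<open>C\<close>: those that occur lie in the common face, hence in \<open>D\<close>,
  and uniqueness of coordinates in the basis of \<open>D\<close> makes one of them a positive multiple of \<open>v\<close>.\<close>
lemma shared_generator:
  assumes uf: "unimodular_fan W Fan" and CD: "C \<in> Fan" "D \<in> Fan"
    and C: "C = cone_mod W U" "U \<subseteq> B" "zbasis_mod W B"
    and D: "D = cone_mod W V" "V \<subseteq> B'" "zbasis_mod W B'"
    and v: "v \<in> V" "v \<in> C"
  shows "\<exists>u\<in>U. u - v \<in> W"
proof -
  have W: "rational_subspace W" and sub: "subspace W"
    using unimodular_fanD[OF uf] by auto
  have finU: "finite U" using zbasis_mod_finite[OF C(3)] C(2) finite_subset by blast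
  have finV: "finite V" using zbasis_mod_finite[OF D(3)] D(2) finite_subset by blast
  have vD: "v \<in> D" using generator_in_cone_mod[OF sub finV v(1)] D(1) by simp
  obtain a where a: "\<forall>u\<in>U. a u \<ge> 0" "v - (\<Sum>u\<in>U. a u *\<^sub>R u) \<in> W"
    using v(2) C(1) unfolding cone_mod_def by blast
  have "u \<in> D" if "u \<in> U" "a u \<noteq> 0" for u
    using face_mod_contains_support[OF sub finU unimodular_fan_inter_face[OF uf CD, unfolded C(1)]
        _ a that] vD v(2) C(1) by blast
  then have "\<forall>u\<in>U. \<exists>bu. a u \<noteq> 0 \<longrightarrow> (\<forall>v'\<in>V. bu v' \<ge> 0) \<and> u - (\<Sum>v'\<in>V. bu v' *\<^sub>R v') \<in> W"
    using D(1) unfolding cone_mod_def by blast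
  then obtain b where b: "\<And>u. u \<in> U \<Longrightarrow> a u \<noteq> 0 \<Longrightarrow>
      (\<forall>v'\<in>V. b u v' \<ge> 0) \<and> u - (\<Sum>v'\<in>V. b u v' *\<^sub>R v') \<in> W"
    by metis
  have comp: "v - (\<Sum>v'\<in>V. (\<Sum>u\<in>U. a u * b u v') *\<^sub>R v') \<in> W"
    using cone_mod_compose[OF sub a(2)] b by blast
  have coord: "(\<Sum>u\<in>U. a u * b u v') = (if v' = v then 1 else 0)" if "v' \<in> V" for v'
  proof -
    have "v' \<in> B'" "v \<in> B'" using that v(1) D(2) by auto
    then show ?thesis
      using dual_basis_vector_coordinate[OF W D(3,2) comp, of v'] that
        inner_dual_basis_vector[OF W D(3), of v' v] by auto
  qed
  have "a u * b u v' \<ge> 0" if "u \<in> U" "v' \<in> V" for u v'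
    using a(1) b that by (cases "a u = 0") auto
  then obtain u0 where u0: "u0 \<in> U" "a u0 * b u0 v > 0" "\<forall>v'\<in>V. v' \<noteq> v \<longrightarrow> a u0 * b u0 v' = 0"
    using nonneg_double_sum_pick[OF finU _ v(1), of "\<lambda>u v'. a u * b u v'"] coord v(1) by auto
  have au0: "a u0 \<noteq> 0" and \<beta>: "b u0 v > 0" using u0(2) a(1) u0(1) zero_less_mult_pos by fastforce+
  have "(\<Sum>v'\<in>V. b u0 v' *\<^sub>R v') = (\<Sum>v'\<in>V. (if v' = v then b u0 v else 0) *\<^sub>R v')"
    using u0(3) au0 by (intro sum.cong) auto
  then have "u0 - b u0 v *\<^sub>R v \<in> W"
    using b[OF u0(1) au0] sum_scaleR_delta[OF finV v(1)] by simp
  moreover have "b u0 v = 1"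
    using zbasis_mod_positive_multiple_eq[OF W C(3) _ D(3) _ \<beta> calculation] u0(1) C(2) v(1) D(2) by blast
  ultimately show ?thesis using u0(1) by auto
qed


section \<open>Piecewise linear functions\<close>

lemma PL_linear_on_cone: "f \<in> PL W Fan \<Longrightarrow> C \<in> Fan \<Longrightarrow> \<exists>m\<in>dualL W. \<forall>x\<in>C. f x = m \<bullet> x"
  unfolding PL_def by blast

lemma PL_outside_supp: "f \<in> PL W Fan \<Longrightarrow> x \<notin> supp Fan \<Longrightarrow> f x = 0"
  unfolding PL_def by blast

lemma PL_add_scaled_int:
  assumes "f \<in> PL W Fan" "g \<in> PL W Fan"
  shows "(\<lambda>x. f x + of_int e * g x) \<in> PL W Fan"
  unfolding PL_def
proof (intro CollectI conjI allI impI ballI)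
  fix x assume "x \<notin> supp Fan"
  then show "f x + of_int e * g x = 0"
    using PL_outside_supp[OF assms(1)] PL_outside_supp[OF assms(2)] by simp
next
  fix C assume C: "C \<in> Fan"
  obtain m where m: "m \<in> dualL W" "\<forall>x\<in>C. f x = m \<bullet> x" using PL_linear_on_cone[OF assms(1) C] by blast
  obtain m' where m': "m' \<in> dualL W" "\<forall>x\<in>C. g x = m' \<bullet> x" using PL_linear_on_cone[OF assms(2) C] by blast
  have "\<forall>x\<in>C. f x + of_int e * g x = (m + of_int e *\<^sub>R m') \<bullet> x"
    using m m' by (simp add: inner_add_left)
  then show "\<exists>m\<in>dualL W. \<forall>x\<in>C. f x + of_int e * g x = m \<bullet> x"
    using dualL_add_scaleR_int[OF m(1) m'(1)] by blast
qed

lemma PL_add: "f \<in> PL W Fan \<Longrightarrow> g \<in> PL W Fan \<Longrightarrow> (\<lambda>x. f x + g x) \<in> PL W Fan"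
  using PL_add_scaled_int[of f W Fan g 1] by simp

lemma PL_zero: "(\<lambda>_. 0) \<in> PL W Fan"
  unfolding PL_def by (auto intro!: bexI[OF _ zero_in_dualL])

lemma L_subset_PL: "L W Fan \<subseteq> PL W Fan"
  unfolding L_def PL_def supp_def by fastforce

lemma fan_cone_saturated:
  "unimodular_fan W Fan \<Longrightarrow> C \<in> Fan \<Longrightarrow> x \<in> C \<Longrightarrow> x - y \<in> W \<Longrightarrow> y \<in> C"
  using cone_mod_saturated[OF unimodular_fan_subspace] cone_presentation(3)[OF _ _ surjective_pairing]
  by metis

lemma fan_cone_add_scaleR:
  "unimodular_fan W Fan \<Longrightarrow> C \<in> Fan \<Longrightarrow> y \<in> C \<Longrightarrow> u \<in> C \<Longrightarrow> t \<ge> 0 \<Longrightarrow> y + t *\<^sub>R u \<in> C"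
  using cone_mod_add_scaleR[OF unimodular_fan_subspace] cone_presentation(3)[OF _ _ surjective_pairing]
  by metis

lemma PL_add_scaleR:
  assumes "unimodular_fan W Fan" "f \<in> PL W Fan" "C \<in> Fan" "y \<in> C" "u \<in> C" "t \<ge> 0"
  shows "f (y + t *\<^sub>R u) = f y + t * f u"
proof -
  obtain m where "\<forall>x\<in>C. f x = m \<bullet> x" using PL_linear_on_cone[OF assms(2,3)] by blast
  then show ?thesis using fan_cone_add_scaleR[OF assms(1,3-6)] assms(4,5) by (simp add: inner_add_right)
qed

lemma PL_expansion:
  assumes uf: "unimodular_fan W Fan" and f: "f \<in> PL W Fan" and C: "cone_mod W U \<in> Fan"
    and UB: "U \<subseteq> B" and zb: "zbasis_mod W B"
    and x: "x \<in> cone_mod W U" "x - (\<Sum>u\<in>U. c u *\<^sub>R u) \<in> W"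
  shows "f x = (\<Sum>u\<in>U. c u * f (ray_gen W (cone_mod W {u})))"
proof -
  have sub: "subspace W" using unimodular_fan_subspace[OF uf] .
  have finU: "finite U" using zbasis_mod_finite[OF zb] UB finite_subset by blast
  obtain m where m: "m \<in> dualL W" "\<forall>x\<in>cone_mod W U. f x = m \<bullet> x"
    using PL_linear_on_cone[OF f C] by blast
  have val: "f (ray_gen W (cone_mod W {u})) = m \<bullet> u" if u: "u \<in> U" for u
  proof -
    have "ray_gen W (cone_mod W {u}) - u \<in> W"
      using ray_gen_eq_mod[OF sub is_ray_gen_zbasis_mod[OF unimodular_fan_rational[OF uf] zb]] UB u by blast
    moreover have "ray_gen W (cone_mod W {u}) \<in> cone_mod W U"
      using ray_gen_mem[OF uf ray_of_cone_generator[OF uf C UB zb u]] cone_mod_singleton_subset[OF sub finU u]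
      by blast
    ultimately show ?thesis using m dualL_inner_eq_mod[OF m(1)] by simp
  qed
  have "f x = m \<bullet> (\<Sum>u\<in>U. c u *\<^sub>R u)" using m x dualL_inner_eq_mod[OF m(1) x(2)] by simp
  also have "\<dots> = (\<Sum>u\<in>U. c u * (m \<bullet> u))" by (simp add: inner_sum_right)
  also have "\<dots> = (\<Sum>u\<in>U. c u * f (ray_gen W (cone_mod W {u})))" using val by simp
  finally show ?thesis .
qed

lemma PL_eqI_ray_gen:
  assumes uf: "unimodular_fan W Fan" and f: "f \<in> PL W Fan" and h: "h \<in> PL W Fan"
    and eq: "\<And>\<rho>. \<rho> \<in> rays W Fan \<Longrightarrow> f (ray_gen W \<rho>) = h (ray_gen W \<rho>)"
  shows "f = h"
proof
  fix x
  show "f x = h x"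
  proof (cases "x \<in> supp Fan")
    case False then show ?thesis using PL_outside_supp f h by metis
  next
    case True
    then obtain C where C: "C \<in> Fan" "x \<in> C" unfolding supp_def by blast
    obtain U B where UB: "cone_presentation W C = (U, B)" by fastforce
    note P = cone_presentation[OF uf C(1) UB]
    obtain c where c: "x - (\<Sum>u\<in>U. c u *\<^sub>R u) \<in> W" using C(2) P(3) unfolding cone_mod_def by blast
    have CU: "cone_mod W U \<in> Fan" "x \<in> cone_mod W U" using C P(3) by auto
    show ?thesis
      unfolding PL_expansion[OF uf f CU(1) P(1,2) CU(2) c] PL_expansion[OF uf h CU(1) P(1,2) CU(2) c]
      using eq ray_of_cone_generator[OF uf CU(1) P(1,2)] by simp
  qed
qed

definition ray_value :: "(real^'n) set \<Rightarrow> (real^'n) set \<Rightarrow> (real^'n \<Rightarrow> real) \<Rightarrow> int" where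
  "ray_value W \<rho> f = \<lfloor>f (ray_gen W \<rho>)\<rfloor>"

lemma of_int_ray_value:
  assumes uf: "unimodular_fan W Fan" and f: "f \<in> PL W Fan" and r: "\<rho> \<in> rays W Fan"
  shows "of_int (ray_value W \<rho> f) = f (ray_gen W \<rho>)"
proof -
  obtain m where m: "m \<in> dualL W" "\<forall>x\<in>\<rho>. f x = m \<bullet> x"
    using PL_linear_on_cone[OF f] rays_subset r by blast
  have "ray_gen W \<rho> \<in> Lam" using is_ray_gen_ray_gen[OF r] unfolding is_ray_gen_def by blast
  then have "f (ray_gen W \<rho>) \<in> \<int>"
    using m ray_gen_mem[OF uf r] inner_dualL_Lam_Ints[OF m(1)] by simp
  then show ?thesis unfolding ray_value_def by (auto elim!: Ints_cases)
qed


section \<open>Courant functions\<close>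

text \<open>On a cone with generators \<open>U\<close> from the basis \<open>B\<close>, the Courant function of the ray through
  \<open>g\<close> is the dual vector of the generator congruent to \<open>g\<close> (or \<open>0\<close> if there is none).\<close>
definition courant_form :: "(real^'n) set \<Rightarrow> (real^'n) set \<Rightarrow> (real^'n) set \<Rightarrow> real^'n \<Rightarrow> real^'n" where
  "courant_form W U B g = (\<Sum>u\<in>{u\<in>U. u - g \<in> W}. dual_basis_vector W B u)"

lemma courant_form_dualL:
  assumes "rational_subspace W" "zbasis_mod W B" "U \<subseteq> B"
  shows "courant_form W U B g \<in> dualL W"
  unfolding courant_form_def
  using zbasis_mod_finite[OF assms(2)] assms(3) dual_basis_vector_dualL[OF assms(1,2)]
  by (intro dualL_sum) (auto intro: finite_subset)

lemma inner_courant_form: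
  assumes "rational_subspace W" "zbasis_mod W B" "U \<subseteq> B" "b \<in> B"
  shows "courant_form W U B g \<bullet> b = (if b \<in> U \<and> b - g \<in> W then 1 else 0)"
proof -
  have fin: "finite {u \<in> U. u - g \<in> W}"
    using zbasis_mod_finite[OF assms(2)] assms(3) finite_subset by fastforce
  have "courant_form W U B g \<bullet> b = (\<Sum>u\<in>{u\<in>U. u - g \<in> W}. if b = u then 1 else 0)"
    unfolding courant_form_def inner_sum_left using assms inner_dual_basis_vector[OF assms(1,2)]
    by (intro sum.cong) auto
  also have "\<dots> = (if b \<in> U \<and> b - g \<in> W then 1 else 0)"
    using fin by (simp add: sum.delta)
  finally show ?thesis .
qed

text \<open>The local Courant forms glue: on a common point of two cones, write the point in the generators
  of one cone; the generators that occur lie in the common face and hence are shared.\<close>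
lemma courant_form_agree:
  assumes uf: "unimodular_fan W Fan" and CD: "C \<in> Fan" "D \<in> Fan"
    and C: "C = cone_mod W U" "U \<subseteq> B" "zbasis_mod W B"
    and D: "D = cone_mod W V" "V \<subseteq> B'" "zbasis_mod W B'"
    and x: "x \<in> C" "x \<in> D"
  shows "courant_form W U B g \<bullet> x = courant_form W V B' g \<bullet> x"
proof -
  have W: "rational_subspace W" and sub: "subspace W" using unimodular_fanD[OF uf] by auto
  have finV: "finite V" using zbasis_mod_finite[OF D(3)] D(2) finite_subset by blast
  obtain d where d: "\<forall>v\<in>V. d v \<ge> 0" "x - (\<Sum>v\<in>V. d v *\<^sub>R v) \<in> W"
    using x(2) D(1) unfolding cone_mod_def by blast
  define mC mD where "mC = courant_form W U B g" and "mD = courant_form W V B' g"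
  have m: "mC \<in> dualL W" "mD \<in> dualL W"
    unfolding mC_def mD_def using courant_form_dualL[OF W] C D by auto
  have eq: "d v * (mC \<bullet> v) = d v * (mD \<bullet> v)" if v: "v \<in> V" for v
  proof (cases "d v = 0")
    case False
    have "v \<in> D \<inter> C"
      using face_mod_contains_support[OF sub finV unimodular_fan_inter_face[OF uf CD(2,1), unfolded D(1)]
          _ d v False] x D(1) by blast
    then obtain u where u: "u \<in> U" "u - v \<in> W" using shared_generator[OF uf CD C D v] by blast
    have "mC \<bullet> v = mC \<bullet> u" using dualL_inner_eq_mod[OF m(1) u(2)] by simp
    also have "\<dots> = (if v - g \<in> W then 1 else 0)"
      using inner_courant_form[OF W C(3,2)] u C(2) diff_in_subspace_trans_iff[OF sub u(2)]
      unfolding mC_def by auto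
    also have "\<dots> = mD \<bullet> v" using inner_courant_form[OF W D(3,2)] v D(2) unfolding mD_def by auto
    finally show ?thesis by simp
  qed simp
  have "mC \<bullet> x = (\<Sum>v\<in>V. d v * (mC \<bullet> v))" "mD \<bullet> x = (\<Sum>v\<in>V. d v * (mD \<bullet> v))"
    using dualL_inner_eq_mod[OF m(1) d(2)] dualL_inner_eq_mod[OF m(2) d(2)] by (simp_all add: inner_sum_right)
  then show ?thesis using eq unfolding mC_def mD_def by (metis (no_types, lifting) sum.cong)
qed

definition courant_fun :: "(real^'n) set \<Rightarrow> (real^'n) set set \<Rightarrow> (real^'n) set \<Rightarrow> real^'n \<Rightarrow> real" where
  "courant_fun W Fan \<rho> x = (if x \<in> supp Fan then
      (case cone_presentation W (SOME C. C \<in> Fan \<and> x \<in> C) of (U, B) \<Rightarrow>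
         courant_form W U B (ray_gen W \<rho>) \<bullet> x)
     else 0)"

lemma courant_fun_on_cone:
  assumes uf: "unimodular_fan W Fan" and D: "D \<in> Fan" "x \<in> D" "cone_presentation W D = (V, B')"
  shows "courant_fun W Fan \<rho> x = courant_form W V B' (ray_gen W \<rho>) \<bullet> x"
proof -
  define C where "C = (SOME C. C \<in> Fan \<and> x \<in> C)"
  have C: "C \<in> Fan" "x \<in> C" unfolding C_def using someI[of "\<lambda>C. C \<in> Fan \<and> x \<in> C"] D by auto
  obtain U B where UB: "cone_presentation W C = (U, B)" by fastforce
  have "x \<in> supp Fan" using D unfolding supp_def by blast
  then have "courant_fun W Fan \<rho> x = courant_form W U B (ray_gen W \<rho>) \<bullet> x"
    unfolding courant_fun_def C_def[symmetric] UB by simp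
  also have "\<dots> = courant_form W V B' (ray_gen W \<rho>) \<bullet> x"
    using courant_form_agree[OF uf C(1) D(1) cone_presentation(3,1,2)[OF uf C(1) UB]
        cone_presentation(3,1,2)[OF uf D(1,3)] C(2) D(2)] .
  finally show ?thesis .
qed

lemma courant_fun_PL: "unimodular_fan W Fan \<Longrightarrow> courant_fun W Fan \<rho> \<in> PL W Fan"
  unfolding PL_def
proof (intro CollectI conjI allI impI ballI)
  fix x assume "x \<notin> supp Fan" then show "courant_fun W Fan \<rho> x = 0" unfolding courant_fun_def by simp
next
  fix D assume uf: "unimodular_fan W Fan" and D: "D \<in> Fan"
  obtain V B' where VB: "cone_presentation W D = (V, B')" by fastforce
  show "\<exists>m\<in>dualL W. \<forall>x\<in>D. courant_fun W Fan \<rho> x = m \<bullet> x"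
    using courant_form_dualL[OF unimodular_fan_rational[OF uf] cone_presentation(2,1)[OF uf D VB]]
      courant_fun_on_cone[OF uf D _ VB] by blast
qed

lemma courant_fun_ray_gen:
  assumes uf: "unimodular_fan W Fan" and r: "\<rho> \<in> rays W Fan" "\<rho>' \<in> rays W Fan"
  shows "courant_fun W Fan \<rho> (ray_gen W \<rho>') = (if \<rho>' = \<rho> then 1 else 0)"
proof -
  have W: "rational_subspace W" and sub: "subspace W" using unimodular_fanD[OF uf] by auto
  define g g' where "g = ray_gen W \<rho>" and "g' = ray_gen W \<rho>'"
  have rg: "is_ray_gen W \<rho> g" "is_ray_gen W \<rho>' g'"
    unfolding g_def g'_def using is_ray_gen_ray_gen r by auto
  have F': "\<rho>' \<in> Fan" using rays_subset r(2) by blast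
  obtain U B where UB: "cone_presentation W \<rho>' = (U, B)" by fastforce
  note P = cone_presentation[OF uf F' UB]
  obtain u' where u': "U = {u'}" "u' - g' \<in> W"
    using ray_cone_presentation[OF W rg(2)[unfolded P(3)] P(1,2)] by blast
  have "courant_fun W Fan \<rho> g' = courant_form W U B g \<bullet> g'"
    using courant_fun_on_cone[OF uf F' is_ray_gen_mem[OF sub rg(2)] UB] unfolding g_def .
  also have "\<dots> = courant_form W U B g \<bullet> u'"
    using dualL_inner_eq_mod[OF courant_form_dualL[OF W P(2,1)] u'(2)] by simp
  also have "\<dots> = (if g' - g \<in> W then 1 else 0)"
    using inner_courant_form[OF W P(2,1)] P(1) u' diff_in_subspace_trans_iff[OF sub u'(2)] by auto
  also have "g' - g \<in> W \<longleftrightarrow> \<rho>' = \<rho>"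
  proof
    assume "g' - g \<in> W"
    then show "\<rho>' = \<rho>" using cone_mod_singleton_cong[OF sub] rg unfolding is_ray_gen_def by metis
  qed (use is_ray_gen_unique[OF sub rg(2)] rg(1) in simp)
  finally show ?thesis unfolding g'_def .
qed

lemma courant_fun_off_star:
  assumes uf: "unimodular_fan W Fan" and r: "\<rho> \<in> rays W Fan" and C: "C \<in> Fan" "\<not> \<rho> \<subseteq> C" "x \<in> C"
  shows "courant_fun W Fan \<rho> x = 0"
proof -
  have sub: "subspace W" using unimodular_fan_subspace[OF uf] .
  obtain U B where UB: "cone_presentation W C = (U, B)" by fastforce
  note P = cone_presentation[OF uf C(1) UB]
  have "{u \<in> U. u - ray_gen W \<rho> \<in> W} = {}"
  proof (rule ccontr)
    assume "{u \<in> U. u - ray_gen W \<rho> \<in> W} \<noteq> {}"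
    then obtain u where u: "u \<in> U" "u - ray_gen W \<rho> \<in> W" by blast
    have "\<rho> = cone_mod W {u}"
      using is_ray_gen_ray_gen[OF r] cone_mod_singleton_cong[OF sub u(2)] unfolding is_ray_gen_def by simp
    then show False using cone_mod_singleton_subset[OF sub P(4) u(1)] P(3) C(2) by blast
  qed
  then show ?thesis
    using courant_fun_on_cone[OF uf C(1,3) UB, of \<rho>] unfolding courant_form_def by (simp only: sum.empty) simp
qed

lemma courant_eq_courant_fun:
  assumes uf: "unimodular_fan W Fan" and r: "\<rho> \<in> rays W Fan"
  shows "courant W Fan \<rho> = courant_fun W Fan \<rho>"
  unfolding courant_def
proof (rule the_equality)
  show "courant_fun W Fan \<rho> \<in> PL W Fan \<and> courant_fun W Fan \<rho> (ray_gen W \<rho>) = 1 \<and>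
      (\<forall>\<rho>'\<in>rays W Fan. \<rho>' \<noteq> \<rho> \<longrightarrow> courant_fun W Fan \<rho> (ray_gen W \<rho>') = 0)"
    using courant_fun_PL[OF uf] courant_fun_ray_gen[OF uf r] r by auto
next
  fix f assume f: "f \<in> PL W Fan \<and> f (ray_gen W \<rho>) = 1 \<and> (\<forall>\<rho>'\<in>rays W Fan. \<rho>' \<noteq> \<rho> \<longrightarrow> f (ray_gen W \<rho>') = 0)"
  show "f = courant_fun W Fan \<rho>"
    using f courant_fun_ray_gen[OF uf r] by (intro PL_eqI_ray_gen[OF uf _ courant_fun_PL[OF uf]]) auto
qed

lemma courant_PL: "unimodular_fan W Fan \<Longrightarrow> \<rho> \<in> rays W Fan \<Longrightarrow> courant W Fan \<rho> \<in> PL W Fan"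
  using courant_eq_courant_fun courant_fun_PL by metis

lemma courant_ray_gen:
  "unimodular_fan W Fan \<Longrightarrow> \<rho> \<in> rays W Fan \<Longrightarrow> \<rho>' \<in> rays W Fan \<Longrightarrow>
    courant W Fan \<rho> (ray_gen W \<rho>') = (if \<rho>' = \<rho> then 1 else 0)"
  using courant_eq_courant_fun courant_fun_ray_gen by metis

lemma courant_off_star:
  "unimodular_fan W Fan \<Longrightarrow> \<rho> \<in> rays W Fan \<Longrightarrow> C \<in> Fan \<Longrightarrow> \<not> \<rho> \<subseteq> C \<Longrightarrow> x \<in> C \<Longrightarrow>
    courant W Fan \<rho> x = 0"
  using courant_eq_courant_fun courant_fun_off_star by metis


section \<open>Linear independence of exponentials\<close>

lemma exp_sum_tendsto_leading:
  fixes a k :: "'i \<Rightarrow> real"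
  assumes "finite I" "\<And>i. i \<in> I \<Longrightarrow> k i \<le> c"
  shows "((\<lambda>t. \<Sum>i\<in>I. a i * exp ((k i - c) * t)) \<longlongrightarrow> (\<Sum>i\<in>{i\<in>I. k i = c}. a i)) at_top"
proof -
  have "((\<lambda>t. a i * exp ((k i - c) * t)) \<longlongrightarrow> (if k i = c then a i else 0)) at_top" if i: "i \<in> I" for i
  proof (cases "k i = c")
    case False
    then have "k i - c < 0" using assms(2)[OF i] by simp
    then have "((\<lambda>t. exp ((k i - c) * t)) \<longlongrightarrow> 0) at_top"
      by (intro filterlim_compose[OF exp_at_bot] filterlim_tendsto_neg_mult_at_bot[OF tendsto_const]
          filterlim_ident)
    with False show ?thesis using tendsto_mult_right_zero by fastforce
  qed simp
  then have "((\<lambda>t. \<Sum>i\<in>I. a i * exp ((k i - c) * t)) \<longlongrightarrow> (\<Sum>i\<in>I. if k i = c then a i else 0)) at_top"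
    by (rule tendsto_sum)
  then show ?thesis using assms(1) by (simp add: sum.inter_filter)
qed

text \<open>The coefficient sum of the largest rate is the limit of the sum normalized by that rate.\<close>
lemma exp_sum_eq_0_top_coeff:
  fixes a k :: "'i \<Rightarrow> real"
  assumes I: "finite I" and zero: "\<forall>t\<ge>0. (\<Sum>i\<in>I. a i * exp (k i * t)) = 0"
    and le: "\<And>i. i \<in> I \<Longrightarrow> k i \<le> c"
  shows "(\<Sum>i\<in>{i\<in>I. k i = c}. a i) = 0"
proof -
  have "eventually (\<lambda>t. (\<Sum>i\<in>I. a i * exp ((k i - c) * t)) = 0) at_top"
  proof (rule eventually_mono[OF eventually_ge_at_top[of 0]])
    fix t :: real assume "t \<ge> 0"
    moreover have scaled: "a i * exp ((k i - c) * t) = exp (- (c * t)) * (a i * exp (k i * t))" for i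
      by (simp add: left_diff_distrib exp_diff exp_minus divide_inverse)
    have "(\<Sum>i\<in>I. a i * exp ((k i - c) * t)) = exp (- (c * t)) * (\<Sum>i\<in>I. a i * exp (k i * t))"
      unfolding sum_distrib_left by (rule sum.cong[OF refl scaled])
    ultimately show "(\<Sum>i\<in>I. a i * exp ((k i - c) * t)) = 0" using zero by simp
  qed
  then show ?thesis
    using tendsto_unique[OF _ exp_sum_tendsto_leading[OF I le] tendsto_eventually] by simp
qed

text \<open>Exponentials with distinct rates are linearly independent on any half-line; induct on the
  number of rates, removing the largest one.\<close>
lemma exp_sum_eq_0_coeffs:
  fixes a k :: "'i \<Rightarrow> real"
  assumes "finite I" "\<forall>t\<ge>0. (\<Sum>i\<in>I. a i * exp (k i * t)) = 0"
  shows "(\<Sum>i\<in>{i\<in>I. k i = c}. a i) = 0"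
  using assms
proof (induction "card (k ` I)" arbitrary: I rule: less_induct)
  case less
  show ?case
  proof (cases "I = {}")
    case False
    define km where "km = Max (k ` I)"
    have finK: "finite (k ` I)" using less.prems(1) by simp
    have kmI: "km \<in> k ` I" unfolding km_def using finK False by simp
    have top: "(\<Sum>i\<in>{i\<in>I. k i = km}. a i) = 0"
      using exp_sum_eq_0_top_coeff[OF less.prems] finK unfolding km_def by simp
    define I' where "I' = {i\<in>I. k i \<noteq> km}"
    have "I \<inter> {i. k i = km} = {i\<in>I. k i = km}" "I - {i. k i = km} = I'" unfolding I'_def by auto
    then have "(\<Sum>i\<in>I. f i) = (\<Sum>i\<in>{i\<in>I. k i = km}. f i) + (\<Sum>i\<in>I'. f i)" for f :: "'i \<Rightarrow> real"
      using sum.Int_Diff[OF less.prems(1), of f "{i. k i = km}"] by simp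
    moreover have "(\<Sum>i\<in>{i\<in>I. k i = km}. a i * exp (k i * t)) = (\<Sum>i\<in>{i\<in>I. k i = km}. a i) * exp (km * t)"
      for t by (simp add: sum_distrib_right)
    ultimately have rest: "\<forall>t\<ge>0. (\<Sum>i\<in>I'. a i * exp (k i * t)) = 0"
      using less.prems(2) top by simp
    have "k ` I' \<subseteq> k ` I - {km}" unfolding I'_def by auto
    then have "card (k ` I') < card (k ` I)"
      using kmI finK by (meson card_Diff1_less card_mono finite_Diff le_less_trans)
    moreover have "finite I'" using less.prems(1) unfolding I'_def by simp
    ultimately have IH: "(\<Sum>i\<in>{i\<in>I'. k i = c}. a i) = 0" using less.hyps rest by blast
    show ?thesis
    proof (cases "c = km")
      case False
      then have "{i\<in>I. k i = c} = {i\<in>I'. k i = c}" unfolding I'_def by auto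
      then show ?thesis using IH by simp
    qed (use top in simp)
  qed simp
qed

lemma exp_sum_list_eq_0_coeffs:
  fixes xs :: "(real \<times> real) list"
  assumes "\<forall>t\<ge>0. (\<Sum>p\<leftarrow>xs. fst p * exp (snd p * t)) = 0"
  shows "(\<Sum>p\<leftarrow>filter (\<lambda>p. snd p = c) xs. fst p) = 0"
proof -
  have nth: "sum_list (map g xs) = (\<Sum>i\<in>{..<length xs}. g (xs ! i))" for g :: "real \<times> real \<Rightarrow> real"
    by (simp add: sum_list_sum_nth atLeast0LessThan)
  have "(\<Sum>i\<in>{i\<in>{..<length xs}. snd (xs!i) = c}. fst (xs!i)) = 0"
    using assms by (intro exp_sum_eq_0_coeffs) (simp_all add: nth)
  then show ?thesis
    unfolding sum_list_map_filter' nth by (simp only: sum.inter_filter[OF finite_lessThan])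
qed


section \<open>Relations among exponentials of piecewise linear functions\<close>

text \<open>A list \<open>\<kappa>\<close> of pairs \<open>(c, f)\<close> stands for the formal sum \<open>\<Sum> c [f]\<close>; it is evaluated either
  as the function \<open>\<Sum> c e\<^sup>f\<close> or through \<open>\<chi>\<close> as \<open>\<Sum> c \<chi>(f)\<close>.\<close>
definition exp_comb :: "(real^'n) set set \<Rightarrow> (int \<times> (real^'n \<Rightarrow> real)) list \<Rightarrow> real^'n \<Rightarrow> real" where
  "exp_comb Fan \<kappa> x = (\<Sum>p\<leftarrow>\<kappa>. of_int (fst p) * expPL Fan (snd p) x)"

definition chi_comb :: "((real^'n \<Rightarrow> real) \<Rightarrow> int) \<Rightarrow> (int \<times> (real^'n \<Rightarrow> real)) list \<Rightarrow> int" where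
  "chi_comb chi \<kappa> = (\<Sum>p\<leftarrow>\<kappa>. fst p * chi (snd p))"

definition shift_terms :: "(real^'n \<Rightarrow> real) \<Rightarrow> (int \<times> (real^'n \<Rightarrow> real)) list \<Rightarrow> (int \<times> (real^'n \<Rightarrow> real)) list" where
  "shift_terms h \<kappa> = map (\<lambda>q. (fst q, \<lambda>x. snd q x + h x)) \<kappa>"

definition respects_exp_relations ::
    "(real^'n) set \<Rightarrow> (real^'n) set set \<Rightarrow> ((real^'n \<Rightarrow> real) \<Rightarrow> int) \<Rightarrow> bool" where
  "respects_exp_relations W Fan chi \<longleftrightarrow>
     (\<forall>\<kappa>. snd ` set \<kappa> \<subseteq> PL W Fan \<longrightarrow> exp_comb Fan \<kappa> = (\<lambda>_. 0) \<longrightarrow> chi_comb chi \<kappa> = 0)"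

lemma exp_comb_append: "exp_comb Fan (\<kappa> @ \<kappa>') x = exp_comb Fan \<kappa> x + exp_comb Fan \<kappa>' x"
  unfolding exp_comb_def by simp

lemma chi_comb_append: "chi_comb chi (\<kappa> @ \<kappa>') = chi_comb chi \<kappa> + chi_comb chi \<kappa>'"
  unfolding chi_comb_def by simp

lemma exp_comb_outside_supp: "x \<notin> supp Fan \<Longrightarrow> exp_comb Fan \<kappa> x = 0"
  unfolding exp_comb_def expPL_def by simp

lemma exp_comb_in_supp: "x \<in> supp Fan \<Longrightarrow> exp_comb Fan \<kappa> x = (\<Sum>p\<leftarrow>\<kappa>. of_int (fst p) * exp (snd p x))"
  unfolding exp_comb_def expPL_def by simp

lemma exp_comb_shift_terms: "exp_comb Fan (shift_terms h \<kappa>) x = exp (h x) * exp_comb Fan \<kappa> x"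
  unfolding exp_comb_def shift_terms_def expPL_def
  by (induction \<kappa>) (auto simp: exp_add algebra_simps)

lemma shift_terms_PL:
  "snd ` set \<kappa> \<subseteq> PL W Fan \<Longrightarrow> h \<in> PL W Fan \<Longrightarrow> snd ` set (shift_terms h \<kappa>) \<subseteq> PL W Fan"
  unfolding shift_terms_def using PL_add by fastforce

lemma shift_terms_shift_terms:
  "shift_terms h (shift_terms h' \<kappa>) = shift_terms (\<lambda>x. h' x + h x) \<kappa>"
  unfolding shift_terms_def by (simp add: add.assoc)

lemma shift_terms_zero: "shift_terms (\<lambda>_. 0) \<kappa> = \<kappa>"
  unfolding shift_terms_def by (induction \<kappa>) auto

definition level :: "(real^'n) set \<Rightarrow> (real^'n) set \<Rightarrow> real \<Rightarrow>
    (int \<times> (real^'n \<Rightarrow> real)) list \<Rightarrow> (int \<times> (real^'n \<Rightarrow> real)) list" where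
  "level W \<rho> k \<kappa> = filter (\<lambda>q. snd q (ray_gen W \<rho>) = k) \<kappa>"

definition off_level :: "(real^'n) set \<Rightarrow> (real^'n) set \<Rightarrow> real \<Rightarrow>
    (int \<times> (real^'n \<Rightarrow> real)) list \<Rightarrow> (int \<times> (real^'n \<Rightarrow> real)) list" where
  "off_level W \<rho> k \<kappa> = filter (\<lambda>q. snd q (ray_gen W \<rho>) \<noteq> k) \<kappa>"

lemma sum_list_map_level_split:
  "sum_list (map g \<kappa>) = sum_list (map g (off_level W \<rho> k \<kappa>)) + sum_list (map g (level W \<rho> k \<kappa>))"
  for g :: "int \<times> (real^'n \<Rightarrow> real) \<Rightarrow> 'b::comm_monoid_add"
  unfolding level_def off_level_def by (induction \<kappa>) (simp_all add: ac_simps)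

lemma exp_comb_level_split:
  "exp_comb Fan \<kappa> x = exp_comb Fan (off_level W \<rho> k \<kappa>) x + exp_comb Fan (level W \<rho> k \<kappa>) x"
  unfolding exp_comb_def by (rule sum_list_map_level_split)

lemma chi_comb_level_split:
  "chi_comb chi \<kappa> = chi_comb chi (off_level W \<rho> k \<kappa>) + chi_comb chi (level W \<rho> k \<kappa>)"
  unfolding chi_comb_def by (rule sum_list_map_level_split)

text \<open>Along the ray \<open>y + t u\<^sub>\<rho>\<close> inside a cone containing \<open>\<rho>\<close> a relation becomes an exponential
  polynomial in \<open>t\<close> whose rates are the values at \<open>u\<^sub>\<rho>\<close>, so each level is itself a relation there.\<close>
lemma exp_comb_level_eq_0:
  assumes uf: "unimodular_fan W Fan" and r: "\<rho> \<in> rays W Fan" and PL: "snd ` set \<kappa> \<subseteq> PL W Fan"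
    and rel: "exp_comb Fan \<kappa> = (\<lambda>_. 0)" and C: "C \<in> Fan" "\<rho> \<subseteq> C" "y \<in> C"
  shows "exp_comb Fan (level W \<rho> k \<kappa>) y = 0"
proof -
  define u where "u = ray_gen W \<rho>"
  have uC: "u \<in> C" using ray_gen_mem[OF uf r] C(2) unfolding u_def by blast
  have supp: "x \<in> C \<Longrightarrow> x \<in> supp Fan" for x using C(1) unfolding supp_def by blast
  have "(\<Sum>q\<leftarrow>map (\<lambda>p. (of_int (fst p) * exp (snd p y), snd p u)) \<kappa>. fst q * exp (snd q * t)) = 0"
    if t: "t \<ge> 0" for t
  proof -
    have yt: "y + t *\<^sub>R u \<in> C" using fan_cone_add_scaleR[OF uf C(1,3) uC t] .
    have "snd p (y + t *\<^sub>R u) = snd p y + snd p u * t" if "p \<in> set \<kappa>" for p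
      using PL_add_scaleR[OF uf _ C(1,3) uC t] PL that by (auto simp: mult.commute)
    then have "exp_comb Fan \<kappa> (y + t *\<^sub>R u) = (\<Sum>p\<leftarrow>\<kappa>. of_int (fst p) * exp (snd p y) * exp (snd p u * t))"
      unfolding exp_comb_in_supp[OF supp[OF yt]] by (intro arg_cong[where f = sum_list] map_cong) (auto simp: exp_add)
    then show ?thesis using rel by (simp add: o_def)
  qed
  then have "(\<Sum>q\<leftarrow>filter (\<lambda>q. snd q = k) (map (\<lambda>p. (of_int (fst p) * exp (snd p y), snd p u)) \<kappa>). fst q) = 0"
    by (intro exp_sum_list_eq_0_coeffs) blast
  then show ?thesis
    unfolding exp_comb_in_supp[OF supp[OF C(3)]] level_def u_def by (simp add: filter_map o_def)
qed


section \<open>Passing to the star of a ray\<close>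

definition L_invariant :: "(real^'n) set \<Rightarrow> (real^'n) set set \<Rightarrow> ((real^'n \<Rightarrow> real) \<Rightarrow> int) \<Rightarrow> bool" where
  "L_invariant W Fan chi \<longleftrightarrow> (\<forall>f\<in>PL W Fan. \<forall>l\<in>L W Fan. chi (\<lambda>x. f x + l x) = chi f)"

definition star_lift :: "(real^'n) set \<Rightarrow> (real^'n) set set \<Rightarrow> (real^'n) set \<Rightarrow> real^'n \<Rightarrow> real^'n" where
  "star_lift W Fan \<rho> x = (SOME y. (\<exists>C\<in>Fan. \<rho> \<subseteq> C \<and> y \<in> C) \<and> x - y \<in> star_space W \<rho>)"

text \<open>The function \<open>[f]\<^sup>\<rho>\<close> on the star fan, computed with a form \<open>m\<close> agreeing with \<open>f\<close> on \<open>\<rho>\<close>.\<close>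
definition star_normal :: "(real^'n) set \<Rightarrow> (real^'n) set set \<Rightarrow> (real^'n) set \<Rightarrow> real^'n \<Rightarrow>
    (real^'n \<Rightarrow> real) \<Rightarrow> real^'n \<Rightarrow> real" where
  "star_normal W Fan \<rho> m f x = (if x \<in> supp (star_fan W Fan \<rho>)
     then f (star_lift W Fan \<rho> x) - m \<bullet> star_lift W Fan \<rho> x else 0)"

lemma star_fun_eq_star_normal:
  "star_fun W Fan \<rho> f = star_normal W Fan \<rho> (SOME m. m \<in> dualL W \<and> (\<forall>x\<in>\<rho>. f x = m \<bullet> x)) f"
  unfolding star_fun_def star_normal_def star_lift_def Let_def by (rule ext) simp

lemma subspace_star_space: "subspace (star_space W \<rho>)"
  unfolding star_space_def by simp

lemma star_fanE:
  assumes "D \<in> star_fan W Fan \<rho>"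
  obtains \<tau> C where "C \<in> Fan" "\<rho> \<subseteq> C" "\<tau> \<subseteq> C"
    "D = {x + w | x w. x \<in> \<tau> \<and> w \<in> star_space W \<rho>}"
  using assms unfolding star_fan_def face_mod_def by blast

lemma star_lift:
  assumes "x \<in> supp (star_fan W Fan \<rho>)"
  shows "\<exists>C\<in>Fan. \<rho> \<subseteq> C \<and> star_lift W Fan \<rho> x \<in> C" "x - star_lift W Fan \<rho> x \<in> star_space W \<rho>"
proof -
  obtain D where D: "D \<in> star_fan W Fan \<rho>" "x \<in> D" using assms unfolding supp_def by blast
  obtain \<tau> C where C: "C \<in> Fan" "\<rho> \<subseteq> C" "\<tau> \<subseteq> C" "D = {x + w | x w. x \<in> \<tau> \<and> w \<in> star_space W \<rho>}"
    using D(1) by (rule star_fanE)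
  then obtain t s where "x = t + s" "t \<in> C" "s \<in> star_space W \<rho>" using D(2) by blast
  then have "\<exists>y. (\<exists>C\<in>Fan. \<rho> \<subseteq> C \<and> y \<in> C) \<and> x - y \<in> star_space W \<rho>"
    using C by (intro exI[of _ t]) auto
  then have "(\<exists>C\<in>Fan. \<rho> \<subseteq> C \<and> star_lift W Fan \<rho> x \<in> C) \<and> x - star_lift W Fan \<rho> x \<in> star_space W \<rho>"
    unfolding star_lift_def by (rule someI_ex)
  then show "\<exists>C\<in>Fan. \<rho> \<subseteq> C \<and> star_lift W Fan \<rho> x \<in> C" "x - star_lift W Fan \<rho> x \<in> star_space W \<rho>"
    by auto
qed

text \<open>If \<open>m\<close> agrees with \<open>f\<close> at \<open>u\<^sub>\<rho>\<close>, then \<open>f - m\<close> is constant along \<open>star_space W \<rho>\<close> on the cones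
  containing \<open>\<rho>\<close>: move both points far enough along \<open>u\<^sub>\<rho>\<close> that they become congruent modulo \<open>W\<close>.\<close>
lemma star_transport:
  assumes uf: "unimodular_fan W Fan" and r: "\<rho> \<in> rays W Fan" and f: "f \<in> PL W Fan"
    and C: "C \<in> Fan" "\<rho> \<subseteq> C" "t \<in> C" and C': "C' \<in> Fan" "\<rho> \<subseteq> C'" "y \<in> C'"
    and ty: "y - t \<in> star_space W \<rho>" and m: "m \<in> dualL W" "m \<bullet> ray_gen W \<rho> = f (ray_gen W \<rho>)"
  shows "f y - m \<bullet> y = f t - m \<bullet> t"
proof -
  define u where "u = ray_gen W \<rho>"
  have uC: "u \<in> C" "u \<in> C'" using ray_gen_mem[OF uf r] C(2) C'(2) unfolding u_def by auto
  obtain r0 where r0: "(y - t) - r0 *\<^sub>R u \<in> W"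
    using ty unfolding star_space_def u_def span_breakdown_eq
      span_eq_iff[THEN iffD2, OF unimodular_fan_subspace[OF uf]] by blast
  define s where "s = max 0 r0"
  have s: "s \<ge> 0" "s - r0 \<ge> 0" unfolding s_def by auto
  define p q where "p = t + s *\<^sub>R u" and "q = y + (s - r0) *\<^sub>R u"
  have "q - p = (y - t) - r0 *\<^sub>R u" unfolding p_def q_def by (simp add: algebra_simps)
  then have qp: "q - p \<in> W" using r0 by simp
  have pq: "p \<in> C'" "q \<in> C'"
    using fan_cone_saturated[OF uf C'(1) _ qp] fan_cone_add_scaleR[OF uf C'(1,3) uC(2) s(2)]
    unfolding q_def by auto
  obtain mC' where mC': "mC' \<in> dualL W" "\<forall>x\<in>C'. f x = mC' \<bullet> x" using PL_linear_on_cone[OF f C'(1)] by blast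
  have "f p = f q" using mC' pq dualL_inner_eq_mod[OF mC'(1) qp] by simp
  moreover have "m \<bullet> p = m \<bullet> q" using dualL_inner_eq_mod[OF m(1) qp] by simp
  moreover have "f p = f t + s * f u" "f q = f y + (s - r0) * f u"
    unfolding p_def q_def using PL_add_scaleR[OF uf f] C C' uC s by auto
  moreover have "m \<bullet> p = m \<bullet> t + s * f u" "m \<bullet> q = m \<bullet> y + (s - r0) * f u"
    unfolding p_def q_def using m(2) by (simp_all add: inner_add_right u_def)
  ultimately show ?thesis by (simp add: algebra_simps)
qed

lemma star_normal_PL:
  assumes uf: "unimodular_fan W Fan" and r: "\<rho> \<in> rays W Fan" and f: "f \<in> PL W Fan"
    and m: "m \<in> dualL W" "m \<bullet> ray_gen W \<rho> = f (ray_gen W \<rho>)"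
  shows "star_normal W Fan \<rho> m f \<in> PL (star_space W \<rho>) (star_fan W Fan \<rho>)"
  unfolding PL_def
proof (intro CollectI conjI allI impI ballI)
  fix x assume "x \<notin> supp (star_fan W Fan \<rho>)"
  then show "star_normal W Fan \<rho> m f x = 0" unfolding star_normal_def by simp
next
  fix D assume D: "D \<in> star_fan W Fan \<rho>"
  obtain \<tau> C where C: "C \<in> Fan" "\<rho> \<subseteq> C" "\<tau> \<subseteq> C" "D = {x + w | x w. x \<in> \<tau> \<and> w \<in> star_space W \<rho>}"
    using D(1) by (rule star_fanE)
  obtain mC where mC: "mC \<in> dualL W" "\<forall>x\<in>C. f x = mC \<bullet> x" using PL_linear_on_cone[OF f C(1)] by blast
  have "(mC - m) \<bullet> ray_gen W \<rho> = 0"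
    using mC(2) m(2) ray_gen_mem[OF uf r] C(2) by (auto simp: inner_diff_left)
  then have md: "mC - m \<in> dualL (star_space W \<rho>)"
    unfolding star_space_def by (rule dualL_span_insert[OF dualL_diff[OF mC(1) m(1)]])
  show "\<exists>m'\<in>dualL (star_space W \<rho>). \<forall>x\<in>D. star_normal W Fan \<rho> m f x = m' \<bullet> x"
  proof (intro bexI[OF _ md] ballI)
    fix x assume xD: "x \<in> D"
    then obtain t s where ts: "x = t + s" "t \<in> C" "s \<in> star_space W \<rho>" using C(3,4) by blast
    have xs: "x \<in> supp (star_fan W Fan \<rho>)" using D xD unfolding supp_def by blast
    define y where "y = star_lift W Fan \<rho> x"
    obtain C' where C': "C' \<in> Fan" "\<rho> \<subseteq> C'" "y \<in> C'" using star_lift(1)[OF xs] unfolding y_def by blast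
    have lift: "x - y \<in> star_space W \<rho>" using star_lift(2)[OF xs] unfolding y_def .
    have "s - (x - y) = y - t" using ts(1) by (simp add: algebra_simps)
    then have yt: "y - t \<in> star_space W \<rho>"
      using subspace_diff[OF subspace_star_space ts(3) lift] by metis
    have "star_normal W Fan \<rho> m f x = f y - m \<bullet> y" unfolding star_normal_def y_def using xs by simp
    also have "\<dots> = f t - m \<bullet> t" by (rule star_transport[OF uf r f C(1,2) ts(2) C' yt m])
    also have "\<dots> = (mC - m) \<bullet> t" using mC ts(2) by (simp add: inner_diff_left)
    also have "\<dots> = (mC - m) \<bullet> x" using dualL_orthogonal[OF md ts(3)] ts(1) by (simp add: inner_add_right)
    finally show "star_normal W Fan \<rho> m f x = (mC - m) \<bullet> x" .
  qed
qed

text \<open>Two normalizing forms differ by a linear function on the star fan.\<close>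
lemma chi_star_normal_change_form:
  assumes uf: "unimodular_fan W Fan" and r: "\<rho> \<in> rays W Fan" and f: "f \<in> PL W Fan"
    and inv: "L_invariant (star_space W \<rho>) (star_fan W Fan \<rho>) chiR"
    and m: "m \<in> dualL W" "m \<bullet> ray_gen W \<rho> = f (ray_gen W \<rho>)"
    and m': "m' \<in> dualL W" "m' \<bullet> ray_gen W \<rho> = f (ray_gen W \<rho>)"
  shows "chiR (star_normal W Fan \<rho> m' f) = chiR (star_normal W Fan \<rho> m f)"
proof -
  define SF where "SF = star_fan W Fan \<rho>"
  have md: "m - m' \<in> dualL (star_space W \<rho>)"
    unfolding star_space_def using m m' by (intro dualL_span_insert dualL_diff) (auto simp: inner_diff_left)
  define l where "l x = (if x \<in> supp SF then (m - m') \<bullet> x else 0)" for x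
  have "l \<in> L (star_space W \<rho>) SF" unfolding L_def l_def using md by blast
  moreover have "star_normal W Fan \<rho> m' f = (\<lambda>x. star_normal W Fan \<rho> m f x + l x)"
  proof
    fix x show "star_normal W Fan \<rho> m' f x = star_normal W Fan \<rho> m f x + l x"
    proof (cases "x \<in> supp SF")
      case True
      have "(m - m') \<bullet> x = (m - m') \<bullet> star_lift W Fan \<rho> x"
        using dualL_inner_eq_mod[OF md star_lift(2)] True unfolding SF_def by blast
      then show ?thesis using True unfolding star_normal_def l_def SF_def by (simp add: inner_diff_left)
    qed (simp add: star_normal_def l_def SF_def)
  qed
  ultimately show ?thesis
    using inv star_normal_PL[OF uf r f m] unfolding L_invariant_def SF_def by simp
qed

lemma chi_star_fun_eq_star_normal:
  assumes uf: "unimodular_fan W Fan" and r: "\<rho> \<in> rays W Fan" and f: "f \<in> PL W Fan"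
    and inv: "L_invariant (star_space W \<rho>) (star_fan W Fan \<rho>) chiR"
    and m: "m \<in> dualL W" "m \<bullet> ray_gen W \<rho> = f (ray_gen W \<rho>)"
  shows "chiR (star_fun W Fan \<rho> f) = chiR (star_normal W Fan \<rho> m f)"
proof -
  have "\<exists>m. m \<in> dualL W \<and> (\<forall>x\<in>\<rho>. f x = m \<bullet> x)"
    using PL_linear_on_cone[OF f] rays_subset r by blast
  then have "(SOME m. m \<in> dualL W \<and> (\<forall>x\<in>\<rho>. f x = m \<bullet> x)) \<in> dualL W \<and>
      (\<forall>x\<in>\<rho>. f x = (SOME m. m \<in> dualL W \<and> (\<forall>x\<in>\<rho>. f x = m \<bullet> x)) \<bullet> x)"
    by (rule someI_ex)
  then show ?thesis
    unfolding star_fun_eq_star_normal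
    using chi_star_normal_change_form[OF uf r f inv m] ray_gen_mem[OF uf r] by auto
qed

lemma exp_comb_star_normal:
  assumes "x \<in> supp (star_fan W Fan \<rho>)" "star_lift W Fan \<rho> x \<in> supp Fan"
  shows "exp_comb (star_fan W Fan \<rho>) (map (\<lambda>p. (fst p, star_normal W Fan \<rho> m (snd p))) \<kappa>) x
    = exp (- (m \<bullet> star_lift W Fan \<rho> x)) * exp_comb Fan \<kappa> (star_lift W Fan \<rho> x)"
proof -
  let ?y = "star_lift W Fan \<rho> x"
  have "exp_comb (star_fan W Fan \<rho>) (map (\<lambda>p. (fst p, star_normal W Fan \<rho> m (snd p))) \<kappa>) x
      = (\<Sum>p\<leftarrow>\<kappa>. exp (- (m \<bullet> ?y)) * (of_int (fst p) * exp (snd p ?y)))"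
    unfolding exp_comb_in_supp[OF assms(1)] star_normal_def
    using assms(1) by (simp add: o_def exp_diff exp_minus divide_inverse mult_ac)
  also have "\<dots> = exp (- (m \<bullet> ?y)) * exp_comb Fan \<kappa> ?y"
    unfolding exp_comb_in_supp[OF assms(2)] by (rule sum_list_const_mult)
  finally show ?thesis .
qed

text \<open>A relation among functions of one level, valid on the cones containing \<open>\<rho>\<close>, induces a relation on
  the star fan; there the Ehrhart polynomial of the star fan kills it by induction on dimension.\<close>
lemma chi_comb_star_fun_level_eq_0:
  assumes uf: "unimodular_fan W Fan" and r: "\<rho> \<in> rays W Fan"
    and inv: "L_invariant (star_space W \<rho>) (star_fan W Fan \<rho>) chiR"
    and resp: "respects_exp_relations (star_space W \<rho>) (star_fan W Fan \<rho>) chiR"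
    and G: "snd ` set G \<subseteq> PL W Fan" "\<And>f. f \<in> snd ` set G \<Longrightarrow> f (ray_gen W \<rho>) = k"
    and rel: "\<And>C y. C \<in> Fan \<Longrightarrow> \<rho> \<subseteq> C \<Longrightarrow> y \<in> C \<Longrightarrow> exp_comb Fan G y = 0"
  shows "chi_comb chiR (map (\<lambda>p. (fst p, star_fun W Fan \<rho> (snd p))) G) = 0"
proof (cases "G = []")
  case False
  define f0 where "f0 = snd (hd G)"
  have f0: "f0 \<in> PL W Fan" "f0 (ray_gen W \<rho>) = k" using G False unfolding f0_def by auto
  obtain m where m: "m \<in> dualL W" "\<forall>x\<in>\<rho>. f0 x = m \<bullet> x"
    using PL_linear_on_cone[OF f0(1)] rays_subset r by blast
  have mu: "m \<bullet> ray_gen W \<rho> = k" using m f0(2) ray_gen_mem[OF uf r] by auto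
  define \<kappa> where "\<kappa> = map (\<lambda>p. (fst p, star_normal W Fan \<rho> m (snd p))) G"
  have "snd ` set \<kappa> \<subseteq> PL (star_space W \<rho>) (star_fan W Fan \<rho>)"
    unfolding \<kappa>_def using star_normal_PL[OF uf r _ m(1)] G mu by fastforce
  moreover have "exp_comb (star_fan W Fan \<rho>) \<kappa> x = 0" for x
  proof (cases "x \<in> supp (star_fan W Fan \<rho>)")
    case True
    then obtain C where C: "C \<in> Fan" "\<rho> \<subseteq> C" "star_lift W Fan \<rho> x \<in> C" using star_lift(1) by blast
    then have "star_lift W Fan \<rho> x \<in> supp Fan" unfolding supp_def by blast
    then show ?thesis unfolding \<kappa>_def using exp_comb_star_normal[OF True] rel[OF C] by simp
  qed (simp add: exp_comb_outside_supp)
  ultimately have "chi_comb chiR \<kappa> = 0" using resp unfolding respects_exp_relations_def by blast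
  moreover have "chiR (star_fun W Fan \<rho> f) = chiR (star_normal W Fan \<rho> m f)" if "f \<in> snd ` set G" for f
    using chi_star_fun_eq_star_normal[OF uf r _ inv m(1)] G that mu by auto
  then have "chi_comb chiR (map (\<lambda>p. (fst p, star_fun W Fan \<rho> (snd p))) G) = chi_comb chiR \<kappa>"
    unfolding \<kappa>_def chi_comb_def map_map o_def by (intro arg_cong[where f = sum_list] map_cong) auto
  ultimately show ?thesis by simp
qed (simp add: chi_comb_def)


section \<open>Moving a level across a Courant function\<close>

definition shift_level :: "(real^'n) set \<Rightarrow> (real^'n) set set \<Rightarrow> (real^'n) set \<Rightarrow> real \<Rightarrow> int \<Rightarrow>
    (int \<times> (real^'n \<Rightarrow> real)) list \<Rightarrow> (int \<times> (real^'n \<Rightarrow> real)) list" where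
  "shift_level W Fan \<rho> k e \<kappa> =
     off_level W \<rho> k \<kappa> @ shift_terms (\<lambda>x. of_int e * courant W Fan \<rho> x) (level W \<rho> k \<kappa>)"

lemma shift_level_PL:
  assumes "unimodular_fan W Fan" "\<rho> \<in> rays W Fan" "snd ` set \<kappa> \<subseteq> PL W Fan"
  shows "snd ` set (shift_level W Fan \<rho> k e \<kappa>) \<subseteq> PL W Fan"
proof -
  have "snd ` set (level W \<rho> k \<kappa>) \<subseteq> PL W Fan"
    using assms(3) unfolding level_def by auto
  moreover have "(\<lambda>x. of_int e * courant W Fan \<rho> x) \<in> PL W Fan"
    using PL_add_scaled_int[OF PL_zero courant_PL[OF assms(1,2)], of e] by simp
  ultimately have "snd ` set (shift_terms (\<lambda>x. of_int e * courant W Fan \<rho> x) (level W \<rho> k \<kappa>)) \<subseteq> PL W Fan"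
    by (rule shift_terms_PL)
  moreover have "snd ` set (off_level W \<rho> k \<kappa>) \<subseteq> PL W Fan"
    using assms(3) unfolding off_level_def by auto
  ultimately show ?thesis unfolding shift_level_def by auto
qed

text \<open>The level vanishes on the cones containing \<open>\<rho>\<close>, and the Courant function vanishes on the
  others.\<close>
lemma exp_comb_shift_level:
  assumes uf: "unimodular_fan W Fan" and r: "\<rho> \<in> rays W Fan" and PL: "snd ` set \<kappa> \<subseteq> PL W Fan"
    and rel: "exp_comb Fan \<kappa> = (\<lambda>_. 0)"
  shows "exp_comb Fan (shift_level W Fan \<rho> k e \<kappa>) = (\<lambda>_. 0)"
proof
  fix x
  have eq: "exp (of_int e * courant W Fan \<rho> x) * exp_comb Fan (level W \<rho> k \<kappa>) x = exp_comb Fan (level W \<rho> k \<kappa>) x"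
  proof (cases "x \<in> supp Fan")
    case True
    then obtain C where C: "C \<in> Fan" "x \<in> C" unfolding supp_def by blast
    show ?thesis
    proof (cases "\<rho> \<subseteq> C")
      case True then show ?thesis using exp_comb_level_eq_0[OF uf r PL rel C(1) True C(2)] by simp
    qed (simp add: courant_off_star[OF uf r C(1) _ C(2)])
  qed (simp add: exp_comb_outside_supp)
  have "exp_comb Fan (shift_level W Fan \<rho> k e \<kappa>) x = exp_comb Fan \<kappa> x"
    unfolding shift_level_def exp_comb_append exp_comb_shift_terms eq
    by (rule exp_comb_level_split[symmetric])
  then show "exp_comb Fan (shift_level W Fan \<rho> k e \<kappa>) x = 0" using rel by simp
qed

text \<open>This is where the recursion defining Ehrhart fans enters: lowering a level by the Courant
  function changes \<open>\<chi>\<close> by terms of the star fan, which cancel.\<close>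
lemma chi_comb_lower_level:
  assumes uf: "unimodular_fan W Fan" and r: "\<rho> \<in> rays W Fan"
    and inv: "L_invariant (star_space W \<rho>) (star_fan W Fan \<rho>) chiR"
    and resp: "respects_exp_relations (star_space W \<rho>) (star_fan W Fan \<rho>) chiR"
    and recur: "\<forall>f\<in>PL W Fan. chi f = chi (\<lambda>x. f x - courant W Fan \<rho> x) + chiR (star_fun W Fan \<rho> f)"
    and G: "snd ` set G \<subseteq> PL W Fan" "\<And>f. f \<in> snd ` set G \<Longrightarrow> f (ray_gen W \<rho>) = k"
    and rel: "\<And>C y. C \<in> Fan \<Longrightarrow> \<rho> \<subseteq> C \<Longrightarrow> y \<in> C \<Longrightarrow> exp_comb Fan G y = 0"
  shows "chi_comb chi (shift_terms (\<lambda>x. - courant W Fan \<rho> x) G) = chi_comb chi G"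
proof -
  have "chi_comb chi G = chi_comb chi (shift_terms (\<lambda>x. - courant W Fan \<rho> x) G)
      + chi_comb chiR (map (\<lambda>p. (fst p, star_fun W Fan \<rho> (snd p))) G)"
    using G(1) recur unfolding chi_comb_def shift_terms_def
    by (induction G) (auto simp: algebra_simps)
  moreover have "chi_comb chiR (map (\<lambda>p. (fst p, star_fun W Fan \<rho> (snd p))) G) = 0"
    by (rule chi_comb_star_fun_level_eq_0[where k = k, OF uf r inv resp]) (use G rel in auto)
  ultimately show ?thesis by simp
qed

lemma chi_comb_raise_level:
  assumes uf: "unimodular_fan W Fan" and r: "\<rho> \<in> rays W Fan"
    and inv: "L_invariant (star_space W \<rho>) (star_fan W Fan \<rho>) chiR"
    and resp: "respects_exp_relations (star_space W \<rho>) (star_fan W Fan \<rho>) chiR"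
    and recur: "\<forall>f\<in>PL W Fan. chi f = chi (\<lambda>x. f x - courant W Fan \<rho> x) + chiR (star_fun W Fan \<rho> f)"
    and G: "snd ` set G \<subseteq> PL W Fan" "\<And>f. f \<in> snd ` set G \<Longrightarrow> f (ray_gen W \<rho>) = k"
    and rel: "\<And>C y. C \<in> Fan \<Longrightarrow> \<rho> \<subseteq> C \<Longrightarrow> y \<in> C \<Longrightarrow> exp_comb Fan G y = 0"
  shows "chi_comb chi (shift_terms (courant W Fan \<rho>) G) = chi_comb chi G"
proof -
  define \<delta> where "\<delta> = courant W Fan \<rho>"
  define G' where "G' = shift_terms \<delta> G"
  have \<delta>: "\<delta> \<in> PL W Fan" "\<delta> (ray_gen W \<rho>) = 1"
    unfolding \<delta>_def using courant_PL[OF uf r] courant_ray_gen[OF uf r r] by auto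
  have G'1: "snd ` set G' \<subseteq> PL W Fan" unfolding G'_def using shift_terms_PL[OF G(1) \<delta>(1)] .
  have G'2: "f (ray_gen W \<rho>) = k + 1" if "f \<in> snd ` set G'" for f
  proof -
    have "f \<in> (\<lambda>q x. snd q x + \<delta> x) ` set G"
      using that unfolding G'_def shift_terms_def by (simp add: image_image)
    then obtain q where q: "q \<in> set G" "f = (\<lambda>x. snd q x + \<delta> x)" by blast
    then have "snd q \<in> snd ` set G" by blast
    then show ?thesis using G(2) \<delta>(2) q(2) by simp
  qed
  have G'3: "exp_comb Fan G' y = 0" if "C \<in> Fan" "\<rho> \<subseteq> C" "y \<in> C" for C y
    unfolding G'_def exp_comb_shift_terms using rel[OF that] by simp
  have "shift_terms (\<lambda>x. - \<delta> x) G' = G"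
    unfolding G'_def shift_terms_shift_terms by (simp add: shift_terms_zero)
  moreover have "chi_comb chi (shift_terms (\<lambda>x. - \<delta> x) G') = chi_comb chi G'"
    unfolding \<delta>_def
    by (rule chi_comb_lower_level[where k = "k + 1", OF uf r inv resp recur]) (use G'1 G'2 G'3 in auto)
  ultimately show ?thesis unfolding G'_def \<delta>_def by simp
qed

lemma chi_comb_shift_level:
  assumes uf: "unimodular_fan W Fan" and r: "\<rho> \<in> rays W Fan"
    and inv: "L_invariant (star_space W \<rho>) (star_fan W Fan \<rho>) chiR"
    and resp: "respects_exp_relations (star_space W \<rho>) (star_fan W Fan \<rho>) chiR"
    and recur: "\<forall>f\<in>PL W Fan. chi f = chi (\<lambda>x. f x - courant W Fan \<rho> x) + chiR (star_fun W Fan \<rho> f)"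
    and PL: "snd ` set \<kappa> \<subseteq> PL W Fan" and rel: "exp_comb Fan \<kappa> = (\<lambda>_. 0)" and e: "e = 1 \<or> e = -1"
  shows "chi_comb chi (shift_level W Fan \<rho> k e \<kappa>) = chi_comb chi \<kappa>"
proof -
  define G where "G = level W \<rho> k \<kappa>"
  have GPL: "snd ` set G \<subseteq> PL W Fan" using PL unfolding G_def level_def by auto
  have Gk: "f (ray_gen W \<rho>) = k" if "f \<in> snd ` set G" for f using that unfolding G_def level_def by auto
  have Grel: "exp_comb Fan G y = 0" if "C \<in> Fan" "\<rho> \<subseteq> C" "y \<in> C" for C y
    unfolding G_def using exp_comb_level_eq_0[OF uf r PL rel that] .
  have "chi_comb chi (shift_terms (courant W Fan \<rho>) G) = chi_comb chi G"
    by (rule chi_comb_raise_level[where k = k, OF uf r inv resp recur]) (use GPL Gk Grel in auto)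
  moreover have "chi_comb chi (shift_terms (\<lambda>x. - courant W Fan \<rho> x) G) = chi_comb chi G"
    by (rule chi_comb_lower_level[where k = k, OF uf r inv resp recur]) (use GPL Gk Grel in auto)
  ultimately have "chi_comb chi (shift_terms (\<lambda>x. of_int e * courant W Fan \<rho> x) G) = chi_comb chi G"
    using e by auto
  then show ?thesis
    unfolding shift_level_def chi_comb_append chi_comb_level_split[of chi \<kappa> W \<rho> k] G_def by simp
qed

section \<open>Ehrhart polynomials respect relations among exponentials\<close>

lemma ray_value_add_scaled_courant:
  assumes uf: "unimodular_fan W Fan" and r: "\<rho> \<in> rays W Fan" "\<rho>' \<in> rays W Fan" and f: "f \<in> PL W Fan"
  shows "ray_value W \<rho>' (\<lambda>x. f x + of_int e * courant W Fan \<rho> x) = ray_value W \<rho>' f + (if \<rho>' = \<rho> then e else 0)"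
proof -
  have "f (ray_gen W \<rho>') + of_int e * courant W Fan \<rho> (ray_gen W \<rho>')
      = of_int (ray_value W \<rho>' f + (if \<rho>' = \<rho> then e else 0))"
    using of_int_ray_value[OF uf f r(2)] courant_ray_gen[OF uf r] by simp
  then show ?thesis unfolding ray_value_def by (simp only: floor_of_int)
qed

definition spread :: "(real^'n) set \<Rightarrow> (real^'n) set set \<Rightarrow> (int \<times> (real^'n \<Rightarrow> real)) list \<Rightarrow> nat" where
  "spread W Fan \<kappa> = (\<Sum>\<rho>\<in>rays W Fan. \<Sum>q\<leftarrow>\<kappa>. nat \<bar>ray_value W \<rho> (snd q)\<bar>)"

lemma spread_shift_level_less:
  assumes uf: "unimodular_fan W Fan" and r: "\<rho> \<in> rays W Fan" and PL: "snd ` set \<kappa> \<subseteq> PL W Fan"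
    and q0: "q0 \<in> set \<kappa>" "ray_value W \<rho> (snd q0) = k" "k \<noteq> 0"
    and e: "e = (if k < 0 then 1 else -1)"
  shows "spread W Fan (shift_level W Fan \<rho> (of_int k) e \<kappa>) < spread W Fan \<kappa>"
proof -
  define G H where "G = level W \<rho> (of_int k) \<kappa>" and "H = off_level W \<rho> (of_int k) \<kappa>"
  define d where "d \<rho>' q = nat \<bar>ray_value W \<rho>' (snd q)\<bar>" for \<rho>' and q :: "int \<times> _"
  define d' where "d' \<rho>' q = nat \<bar>ray_value W \<rho>' (snd q) + (if \<rho>' = \<rho> then e else 0)\<bar>"
    for \<rho>' and q :: "int \<times> _"
  have G: "snd q \<in> PL W Fan" "ray_value W \<rho> (snd q) = k" if "q \<in> set G" for q
  proof -
    have q: "q \<in> set \<kappa>" "snd q (ray_gen W \<rho>) = of_int k" using that unfolding G_def level_def by auto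
    then show "snd q \<in> PL W Fan" using PL by auto
    then have "real_of_int (ray_value W \<rho> (snd q)) = of_int k" using of_int_ray_value[OF uf _ r] q(2) by simp
    then show "ray_value W \<rho> (snd q) = k" by simp
  qed
  have "spread W Fan \<kappa> = (\<Sum>\<rho>'\<in>rays W Fan. (\<Sum>q\<leftarrow>H. d \<rho>' q) + (\<Sum>q\<leftarrow>G. d \<rho>' q))"
    unfolding spread_def d_def H_def G_def sum_list_map_level_split[of _ \<kappa> W \<rho> "of_int k"] ..
  moreover have "spread W Fan (shift_level W Fan \<rho> (of_int k) e \<kappa>)
      = (\<Sum>\<rho>'\<in>rays W Fan. (\<Sum>q\<leftarrow>H. d \<rho>' q) + (\<Sum>q\<leftarrow>G. d' \<rho>' q))"
    unfolding spread_def shift_level_def shift_terms_def H_def[symmetric] G_def[symmetric]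
    using ray_value_add_scaled_courant[OF uf r _ G(1)]
    by (intro sum.cong refl) (simp add: d_def d'_def o_def cong: map_cong)
  moreover have "(\<Sum>\<rho>'\<in>rays W Fan. (\<Sum>q\<leftarrow>H. d \<rho>' q) + (\<Sum>q\<leftarrow>G. d' \<rho>' q))
      < (\<Sum>\<rho>'\<in>rays W Fan. (\<Sum>q\<leftarrow>H. d \<rho>' q) + (\<Sum>q\<leftarrow>G. d \<rho>' q))"
  proof (rule sum_strict_mono_ex1[OF rays_finite[OF uf]])
    have "d' \<rho> q < d \<rho> q" if "q \<in> set G" for q
      using G(2)[OF that] q0(3) e unfolding d_def d'_def by auto
    moreover have "snd q0 \<in> PL W Fan" using PL q0(1) by auto
    then have "q0 \<in> set G"
      using q0 of_int_ray_value[OF uf _ r, of "snd q0"] unfolding G_def level_def by auto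
    then have "G \<noteq> []" by auto
    ultimately show "\<exists>\<rho>'\<in>rays W Fan. (\<Sum>q\<leftarrow>H. d \<rho>' q) + (\<Sum>q\<leftarrow>G. d' \<rho>' q)
        < (\<Sum>q\<leftarrow>H. d \<rho>' q) + (\<Sum>q\<leftarrow>G. d \<rho>' q)"
      using r sum_list_strict_mono[of G "d' \<rho>" "d \<rho>"] by auto
    have "d' \<rho>' q \<le> d \<rho>' q" if "q \<in> set G" for \<rho>' q
      using G(2)[OF that] q0(3) e unfolding d_def d'_def by auto
    then show "\<forall>\<rho>'\<in>rays W Fan. (\<Sum>q\<leftarrow>H. d \<rho>' q) + (\<Sum>q\<leftarrow>G. d' \<rho>' q)
        \<le> (\<Sum>q\<leftarrow>H. d \<rho>' q) + (\<Sum>q\<leftarrow>G. d \<rho>' q)"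
      by (auto intro!: sum_list_mono)
  qed
  ultimately show ?thesis by simp
qed

lemma chi_comb_eq_0_if_ray_values_0:
  assumes uf: "unimodular_fan W Fan" and PL: "snd ` set \<kappa> \<subseteq> PL W Fan"
    and rel: "exp_comb Fan \<kappa> = (\<lambda>_. 0)"
    and zero: "\<And>\<rho> q. \<rho> \<in> rays W Fan \<Longrightarrow> q \<in> set \<kappa> \<Longrightarrow> ray_value W \<rho> (snd q) = 0"
  shows "chi_comb chi \<kappa> = 0"
proof -
  have "snd q (ray_gen W \<rho>) = 0" if "q \<in> set \<kappa>" "\<rho> \<in> rays W Fan" for q \<rho>
    using of_int_ray_value[OF uf _ that(2), of "snd q"] zero[OF that(2,1)] PL that(1) by auto
  then have fq: "snd q = (\<lambda>_. 0)" if "q \<in> set \<kappa>" for q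
    using PL that by (intro PL_eqI_ray_gen[OF uf _ PL_zero]) auto
  have "chi_comb chi \<kappa> = (\<Sum>q\<leftarrow>\<kappa>. fst q) * chi (\<lambda>_. 0)"
    unfolding chi_comb_def sum_list_mult_const[symmetric] using fq by (intro arg_cong[where f = sum_list] map_cong) auto
  moreover have "0 \<in> supp Fan"
    using unimodular_fan_zero_cone[OF uf] subspace_0[OF unimodular_fan_subspace[OF uf]] unfolding supp_def by blast
  then have "exp_comb Fan \<kappa> 0 = of_int (\<Sum>q\<leftarrow>\<kappa>. fst q)"
    unfolding exp_comb_in_supp[OF \<open>0 \<in> supp Fan\<close>] sum_list_of_int[symmetric] using fq
    by (intro arg_cong[where f = sum_list] map_cong) auto
  ultimately show ?thesis using rel by (metis mult_eq_0_iff of_int_0_eq_iff)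
qed

text \<open>Induction on \<open>spread\<close>: while some term has a nonzero ray value \<open>k\<close> at some ray, move the whole
  level \<open>k\<close> one step towards \<open>0\<close>; this preserves the relation and the value of \<open>\<chi>\<close>.\<close>
lemma respects_exp_relations_if_recursion:
  assumes uf: "unimodular_fan W Fan"
    and stars: "\<And>\<rho>. \<rho> \<in> rays W Fan \<Longrightarrow> L_invariant (star_space W \<rho>) (star_fan W Fan \<rho>) (chis \<rho>) \<and>
      respects_exp_relations (star_space W \<rho>) (star_fan W Fan \<rho>) (chis \<rho>)"
    and recur: "\<forall>f\<in>PL W Fan. \<forall>\<rho>\<in>rays W Fan.
      chi f = chi (\<lambda>x. f x - courant W Fan \<rho> x) + chis \<rho> (star_fun W Fan \<rho> f)"
  shows "respects_exp_relations W Fan chi"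
  unfolding respects_exp_relations_def
proof (intro allI impI)
  fix \<kappa>
  assume "snd ` set \<kappa> \<subseteq> PL W Fan" "exp_comb Fan \<kappa> = (\<lambda>_. 0)"
  then show "chi_comb chi \<kappa> = 0"
  proof (induction "spread W Fan \<kappa>" arbitrary: \<kappa> rule: less_induct)
    case less
    show ?case
    proof (cases "\<exists>\<rho>\<in>rays W Fan. \<exists>q\<in>set \<kappa>. ray_value W \<rho> (snd q) \<noteq> 0")
      case True
      then obtain \<rho> q0 where r: "\<rho> \<in> rays W Fan" and q0: "q0 \<in> set \<kappa>" "ray_value W \<rho> (snd q0) \<noteq> 0"
        by blast
      define k where "k = ray_value W \<rho> (snd q0)"
      define e :: int where "e = (if k < 0 then 1 else -1)"
      define \<kappa>' where "\<kappa>' = shift_level W Fan \<rho> (of_int k) e \<kappa>"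
      have "spread W Fan \<kappa>' < spread W Fan \<kappa>"
        unfolding \<kappa>'_def using spread_shift_level_less[OF uf r less.prems(1) q0(1) k_def[symmetric]] q0(2)
        unfolding k_def e_def by blast
      moreover have "snd ` set \<kappa>' \<subseteq> PL W Fan" "exp_comb Fan \<kappa>' = (\<lambda>_. 0)"
        unfolding \<kappa>'_def using shift_level_PL[OF uf r less.prems(1)] exp_comb_shift_level[OF uf r less.prems]
        by auto
      ultimately have "chi_comb chi \<kappa>' = 0" using less.hyps by blast
      moreover have "chi_comb chi \<kappa>' = chi_comb chi \<kappa>"
        unfolding \<kappa>'_def using stars[OF r] recur r less.prems e_def
        by (intro chi_comb_shift_level[OF uf r]) auto
      ultimately show ?thesis by simp
    qed (use chi_comb_eq_0_if_ray_values_0[OF uf less.prems] in blast)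
  qed
qed

lemma ehrhart_with_L_invariant: "ehrhart_with W Fan chi \<Longrightarrow> L_invariant W Fan chi"
  unfolding L_invariant_def by (cases rule: ehrhart_with.cases) auto

lemma ehrhart_with_respects_exp_relations:
  "ehrhart_with W Fan chi \<Longrightarrow> respects_exp_relations W Fan chi"
proof (induction rule: ehrhart_with.induct)
  case (1 W Fan chis chi)
  have "L_invariant (star_space W \<rho>) (star_fan W Fan \<rho>) (chis \<rho>) \<and>
      respects_exp_relations (star_space W \<rho>) (star_fan W Fan \<rho>) (chis \<rho>)" if "\<rho> \<in> rays W Fan" for \<rho>
    using 1 ehrhart_with_L_invariant that by blast
  then show ?case by (rule respects_exp_relations_if_recursion[rotated]) (use 1 in blast)+
qed


section \<open>The induced map on exponentials\<close>

definition exp_rep :: "(real^'n) set \<Rightarrow> (real^'n) set set \<Rightarrow> (real^'n \<Rightarrow> real) \<Rightarrow>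
    (int \<times> (real^'n \<Rightarrow> real)) list \<Rightarrow> bool" where
  "exp_rep W Fan a \<kappa> \<longleftrightarrow> snd ` set \<kappa> \<subseteq> PL W Fan \<and> a = exp_comb Fan \<kappa>"

definition scale_terms :: "int \<Rightarrow> (int \<times> (real^'n \<Rightarrow> real)) list \<Rightarrow> (int \<times> (real^'n \<Rightarrow> real)) list" where
  "scale_terms c \<kappa> = map (\<lambda>q. (c * fst q, snd q)) \<kappa>"

definition mult_terms :: "(int \<times> (real^'n \<Rightarrow> real)) list \<Rightarrow> (int \<times> (real^'n \<Rightarrow> real)) list \<Rightarrow>
    (int \<times> (real^'n \<Rightarrow> real)) list" where
  "mult_terms \<kappa> \<kappa>' = concat (map (\<lambda>p. scale_terms (fst p) (shift_terms (snd p) \<kappa>')) \<kappa>)"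

lemma exp_comb_scale_terms: "exp_comb Fan (scale_terms c \<kappa>) x = of_int c * exp_comb Fan \<kappa> x"
  unfolding exp_comb_def scale_terms_def by (induction \<kappa>) (auto simp: algebra_simps)

lemma chi_comb_scale_terms: "chi_comb chi (scale_terms c \<kappa>) = c * chi_comb chi \<kappa>"
  unfolding chi_comb_def scale_terms_def by (induction \<kappa>) (auto simp: algebra_simps)

lemma snd_set_scale_terms: "snd ` set (scale_terms c \<kappa>) = snd ` set \<kappa>"
  unfolding scale_terms_def by (simp add: image_image)

lemma exp_comb_single: "exp_comb Fan [(1, f)] = expPL Fan f"
  unfolding exp_comb_def by simp

lemma mult_terms_Cons:
  "mult_terms (p # \<kappa>) \<kappa>' = scale_terms (fst p) (shift_terms (snd p) \<kappa>') @ mult_terms \<kappa> \<kappa>'"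
  unfolding mult_terms_def by simp

lemma shift_terms_append: "shift_terms h (\<kappa> @ \<kappa>') = shift_terms h \<kappa> @ shift_terms h \<kappa>'"
  unfolding shift_terms_def by simp

lemma exp_comb_mult_terms: "exp_comb Fan (mult_terms \<kappa> \<kappa>') x = exp_comb Fan \<kappa> x * exp_comb Fan \<kappa>' x"
proof (induction \<kappa>)
  case (Cons p \<kappa>)
  have "exp (snd p x) * exp_comb Fan \<kappa>' x = expPL Fan (snd p) x * exp_comb Fan \<kappa>' x"
    using exp_comb_outside_supp[of x Fan \<kappa>'] unfolding expPL_def by auto
  moreover have "exp_comb Fan (p # \<kappa>) x = of_int (fst p) * expPL Fan (snd p) x + exp_comb Fan \<kappa> x"
    by (simp add: exp_comb_def)
  ultimately show ?case
    using Cons by (simp add: mult_terms_Cons exp_comb_append exp_comb_scale_terms exp_comb_shift_terms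
        algebra_simps)
qed (simp add: mult_terms_def exp_comb_def)

lemma chi_comb_shift_mult_terms:
  "chi_comb chi (shift_terms h (mult_terms \<kappa> \<kappa>')) =
     (\<Sum>p\<leftarrow>\<kappa>. fst p * chi_comb chi (shift_terms (\<lambda>x. snd p x + h x) \<kappa>'))"
proof (induction \<kappa>)
  case (Cons p \<kappa>)
  have "shift_terms h (scale_terms (fst p) (shift_terms (snd p) \<kappa>'))
      = scale_terms (fst p) (shift_terms (\<lambda>x. snd p x + h x) \<kappa>')"
    unfolding shift_terms_def scale_terms_def by (simp add: add.assoc)
  then show ?case
    using Cons by (simp add: mult_terms_Cons shift_terms_append chi_comb_append chi_comb_scale_terms)
qed (simp add: mult_terms_def shift_terms_def chi_comb_def)

lemma mult_terms_PL:
  "snd ` set \<kappa> \<subseteq> PL W Fan \<Longrightarrow> snd ` set \<kappa>' \<subseteq> PL W Fan \<Longrightarrow> snd ` set (mult_terms \<kappa> \<kappa>') \<subseteq> PL W Fan"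
  unfolding mult_terms_def scale_terms_def shift_terms_def
  by (fastforce simp: image_subset_iff intro!: PL_add)

lemma PE_exp_rep: "a \<in> PE W Fan \<Longrightarrow> \<exists>\<kappa>. exp_rep W Fan a \<kappa>"
proof (induction rule: PE.induct)
  case (gen f)
  then show ?case by (intro exI[of _ "[(1, f)]"]) (simp add: exp_rep_def exp_comb_single)
next
  case (add a b)
  then obtain \<kappa> \<kappa>' where "exp_rep W Fan a \<kappa>" "exp_rep W Fan b \<kappa>'" by blast
  then show ?case by (intro exI[of _ "\<kappa> @ \<kappa>'"]) (auto simp: exp_rep_def exp_comb_append fun_eq_iff)
next
  case (neg a)
  then obtain \<kappa> where "exp_rep W Fan a \<kappa>" by blast
  then show ?case
    by (intro exI[of _ "scale_terms (-1) \<kappa>"]) (auto simp: exp_rep_def exp_comb_scale_terms fun_eq_iff snd_set_scale_terms)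
next
  case (mult a b)
  then obtain \<kappa> \<kappa>' where \<kappa>: "exp_rep W Fan a \<kappa>" "exp_rep W Fan b \<kappa>'" by blast
  then have "snd ` set (mult_terms \<kappa> \<kappa>') \<subseteq> PL W Fan"
    unfolding exp_rep_def by (intro mult_terms_PL) auto
  then show ?case
    using \<kappa> by (intro exI[of _ "mult_terms \<kappa> \<kappa>'"]) (auto simp: exp_rep_def exp_comb_mult_terms fun_eq_iff)
qed

lemma chi_comb_exp_rep_unique:
  assumes "respects_exp_relations W Fan chi" "exp_rep W Fan a \<kappa>" "exp_rep W Fan a \<kappa>'"
  shows "chi_comb chi \<kappa> = chi_comb chi \<kappa>'"
proof -
  have "snd ` set (\<kappa> @ scale_terms (-1) \<kappa>') \<subseteq> PL W Fan"
    using assms(2,3) unfolding exp_rep_def by (simp add: image_Un snd_set_scale_terms)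
  moreover have "exp_comb Fan (\<kappa> @ scale_terms (-1) \<kappa>') = (\<lambda>_. 0)"
    using assms(2,3) unfolding exp_rep_def by (auto simp: exp_comb_append exp_comb_scale_terms)
  ultimately have "chi_comb chi (\<kappa> @ scale_terms (-1) \<kappa>') = 0"
    using assms(1) unfolding respects_exp_relations_def by blast
  then show ?thesis by (simp add: chi_comb_append chi_comb_scale_terms)
qed

text \<open>The generators are killed because \<open>\<chi>\<close> is invariant under adding linear functions; quantifying
  over all shifts makes the property stable under multiplication by elements of \<open>PE\<close>.\<close>
lemma PE_ideal_exp_rep:
  assumes inv: "L_invariant W Fan chi"
  shows "a \<in> PE_ideal W Fan \<Longrightarrow> \<exists>\<kappa>. exp_rep W Fan a \<kappa> \<and> (\<forall>h\<in>PL W Fan. chi_comb chi (shift_terms h \<kappa>) = 0)"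
proof (induction rule: PE_ideal.induct)
  case (gen l)
  have "exp_rep W Fan (\<lambda>x. expPL Fan l x - expPL Fan (\<lambda>_. 0) x) [(1, l), (-1, \<lambda>_. 0)]"
    unfolding exp_rep_def using L_subset_PL gen PL_zero by (auto simp: fun_eq_iff exp_comb_def)
  moreover have "chi_comb chi (shift_terms h [(1, l), (-1, \<lambda>_. 0)]) = 0" if "h \<in> PL W Fan" for h
  proof -
    have "chi (\<lambda>x. h x + l x) = chi h" using inv gen that unfolding L_invariant_def by blast
    then show ?thesis by (simp add: chi_comb_def shift_terms_def add.commute)
  qed
  ultimately show ?case by blast
next
  case zero
  have "exp_rep W Fan (\<lambda>_. 0) []" by (simp add: exp_rep_def fun_eq_iff exp_comb_def)
  then show ?case by (auto simp: chi_comb_def shift_terms_def)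
next
  case (add a b)
  then obtain \<kappa> \<kappa>' where "exp_rep W Fan a \<kappa>" "exp_rep W Fan b \<kappa>'"
    "\<forall>h\<in>PL W Fan. chi_comb chi (shift_terms h \<kappa>) = 0" "\<forall>h\<in>PL W Fan. chi_comb chi (shift_terms h \<kappa>') = 0"
    by blast
  then show ?case
    by (intro exI[of _ "\<kappa> @ \<kappa>'"]) (auto simp: exp_rep_def exp_comb_append shift_terms_append chi_comb_append fun_eq_iff)
next
  case (mult p a)
  obtain \<pi> where \<pi>: "exp_rep W Fan p \<pi>" using PE_exp_rep[OF mult(1)] by blast
  obtain \<kappa> where \<kappa>: "exp_rep W Fan a \<kappa>" "\<forall>h\<in>PL W Fan. chi_comb chi (shift_terms h \<kappa>) = 0"
    using mult(3) by blast
  have "snd ` set (mult_terms \<pi> \<kappa>) \<subseteq> PL W Fan"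
    using \<pi> \<kappa> unfolding exp_rep_def by (intro mult_terms_PL) auto
  then have "exp_rep W Fan (\<lambda>x. p x * a x) (mult_terms \<pi> \<kappa>)"
    using \<pi> \<kappa> unfolding exp_rep_def by (auto simp: exp_comb_mult_terms)
  moreover have "chi_comb chi (shift_terms h (mult_terms \<pi> \<kappa>)) = 0" if "h \<in> PL W Fan" for h
  proof -
    have "(\<Sum>q\<leftarrow>\<pi>. fst q * chi_comb chi (shift_terms (\<lambda>x. snd q x + h x) \<kappa>)) = (\<Sum>q\<leftarrow>\<pi>. 0)"
      using \<pi> \<kappa>(2) that unfolding exp_rep_def
      by (intro arg_cong[where f = sum_list] map_cong) (auto intro!: PL_add)
    then show ?thesis unfolding chi_comb_shift_mult_terms by simp
  qed
  ultimately show ?case by blast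
qed

theorem corollary5:
  fixes W :: "(real^'n) set" and Fan :: "(real^'n) set set"
    and chi :: "(real^'n \<Rightarrow> real) \<Rightarrow> int"
  assumes "ehrhart_with W Fan chi"
  shows "\<exists>g :: (real^'n \<Rightarrow> real) \<Rightarrow> int.
           (\<forall>a\<in>PE W Fan. \<forall>b\<in>PE W Fan. g (\<lambda>x. a x + b x) = g a + g b) \<and>
           (\<forall>a\<in>PE_ideal W Fan. g a = 0) \<and>
           (\<forall>f\<in>PL W Fan. g (expPL Fan f) = chi f)"
proof -
  define g where "g a = chi_comb chi (SOME \<kappa>. exp_rep W Fan a \<kappa>)" for a
  have g: "g a = chi_comb chi \<kappa>" if "exp_rep W Fan a \<kappa>" for a \<kappa>
    unfolding g_def using chi_comb_exp_rep_unique[OF ehrhart_with_respects_exp_relations[OF assms]]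
      someI[of "exp_rep W Fan a", OF that] that by blast
  show ?thesis
  proof (intro exI[of _ g] conjI ballI)
    fix a b assume "a \<in> PE W Fan" "b \<in> PE W Fan"
    then obtain \<kappa> \<kappa>' where \<kappa>: "exp_rep W Fan a \<kappa>" "exp_rep W Fan b \<kappa>'" using PE_exp_rep by blast
    then have "exp_rep W Fan (\<lambda>x. a x + b x) (\<kappa> @ \<kappa>')" by (auto simp: exp_rep_def exp_comb_append fun_eq_iff)
    then show "g (\<lambda>x. a x + b x) = g a + g b" using g \<kappa> by (simp add: chi_comb_append)
  next
    fix a assume "a \<in> PE_ideal W Fan"
    then obtain \<kappa> where "exp_rep W Fan a \<kappa>" "chi_comb chi (shift_terms (\<lambda>_. 0) \<kappa>) = 0"
      using PE_ideal_exp_rep[OF ehrhart_with_L_invariant[OF assms]] PL_zero by blast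
    then show "g a = 0" using g by (simp add: shift_terms_zero)
  next
    fix f assume "f \<in> PL W Fan"
    then have "exp_rep W Fan (expPL Fan f) [(1, f)]" by (simp add: exp_rep_def exp_comb_single)
    then show "g (expPL Fan f) = chi f" using g by (simp add: chi_comb_def)
  qed
qed

end
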